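(* Let $W$ be the set of matrices $\left(\begin{array}{cc} a & b \\ c & d\end{array}\right)$ in $SL(2,\mathbb{R})$ such that $d>0$ and $|bd|<\frac12$. The map $(t,\theta,u)\mapsto g_t R_\theta n_u$ from $\mathbb{R}\times(-\frac{\pi}{4},\frac{\pi}{4})\times\mathbb{R}$ to $SL(2,\mathbb{R})$ is a diffeomorphism onto $W$. Using this map to take $(t,\theta,u)$ as coordinates on $W$, the restriction to $W$ of (a conveniently scaled version of) the Haar measure of $SL(2,\mathbb{R})$ is equal to $\cos 2\theta\, dt\, d\theta\, du$.
   Context: Here $g_t$ denotes the diagonal matrix $\mathrm{diag}(e^t,e^{-t})$ in $SL(2,\mathbb{R})$, $R_\theta\in SO(2,\mathbb{R})$ denotes the rotation of angle $\theta$, and $n_u$ denotes the lower triangular matrix $\left(\begin{array}{cc} 1 & 0 \\ u & 1\end{array}\right)$. *)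

theory Defs
  imports "HOL-Analysis.Analysis"
begin

text \<open>2x2 real matrices are \<open>real^2^2\<close>; entry (i,j) is \<open>M $ i $ j\<close>.\<close>

definition SL2 :: "(real^2^2) set" where
  "SL2 = {M. det M = 1}"

definition mat2 :: "real \<Rightarrow> real \<Rightarrow> real \<Rightarrow> real \<Rightarrow> real^2^2" where
  "mat2 a b c d = vector [vector [a, b], vector [c, d]]"

definition g_diag :: "real \<Rightarrow> real^2^2" where
  "g_diag t = mat2 (exp t) 0 0 (exp (- t))"

definition rot :: "real \<Rightarrow> real^2^2" where
  "rot \<theta> = mat2 (cos \<theta>) (- sin \<theta>) (sin \<theta>) (cos \<theta>)"

definition n_low :: "real \<Rightarrow> real^2^2" where
  "n_low u = mat2 1 0 u 1"

definition W_set :: "(real^2^2) set" where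
  "W_set = {M \<in> SL2. M $ 2 $ 2 > 0 \<and> \<bar>M $ 1 $ 2 * M $ 2 $ 2\<bar> < 1 / 2}"

definition coord_dom :: "(real \<times> real \<times> real) set" where
  "coord_dom = UNIV \<times> {- pi / 4 <..< pi / 4} \<times> UNIV"

definition coord_map :: "real \<times> real \<times> real \<Rightarrow> real^2^2" where
  "coord_map p = (case p of (t, \<theta>, u) \<Rightarrow> g_diag t ** rot \<theta> ** n_low u)"

fun cont_diff :: "nat \<Rightarrow> 'a::real_normed_vector set \<Rightarrow> ('a \<Rightarrow> 'b::real_normed_vector) \<Rightarrow> bool" where
  "cont_diff 0 S f = continuous_on S f"
| "cont_diff (Suc k) S f =
     ((\<forall>x\<in>S. f differentiable (at x)) \<and> (\<forall>v. cont_diff k S (\<lambda>x. frechet_derivative f (at x) v)))"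

definition smooth_on :: "'a::real_normed_vector set \<Rightarrow> ('a \<Rightarrow> 'b::real_normed_vector) \<Rightarrow> bool" where
  "smooth_on S f \<longleftrightarrow> (\<forall>k. cont_diff k S f)"

text \<open>A (left) Haar measure on SL(2,R), realised as a Borel measure on the ambient space
  of 2x2 matrices concentrated on the closed subgroup SL2: left-invariant under SL2,
  finite on compact sets, positive on nonempty (relatively) open subsets of SL2.\<close>
definition haar_SL2 :: "(real^2^2) measure \<Rightarrow> bool" where
  "haar_SL2 \<mu> \<longleftrightarrow>
     sets \<mu> = sets borel \<and>
     emeasure \<mu> (UNIV - SL2) = 0 \<and>
     (\<forall>g\<in>SL2. \<forall>A\<in>sets borel. emeasure \<mu> ((\<lambda>x. g ** x) ` A) = emeasure \<mu> A) \<and>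
     (\<forall>K. compact K \<longrightarrow> emeasure \<mu> K < \<infinity>) \<and>
     (\<forall>U. openin (top_of_set SL2) U \<and> U \<noteq> {} \<longrightarrow> emeasure \<mu> U > 0)"

end

theory Submission
  imports Defs
begin

text \<open>A Haar measure of \<open>SL(2,\<real>)\<close> is the image of Lebesgue measure on the cone
  \<open>0 < det \<le> 1\<close> of \<open>2\<times>2\<close> matrices under \<open>M \<mapsto> M / \<surd>det M\<close>. Integrating out the entry \<open>a\<close>
  and the determinant shows that its density in the chart \<open>(b,c,d)\<close> of \<open>{d > 0}\<close> is \<open>1/d\<close>;
  the substitutions \<open>c = e\<^sup>-\<^sup>t (sin \<theta> + u cos \<theta>)\<close>, \<open>d = e\<^sup>-\<^sup>t cos \<theta>\<close> and
  \<open>b d = - sin (2\<theta>) / 2\<close> then turn \<open>db dc dd / d\<close> into \<open>cos 2\<theta> dt d\<theta> du\<close>.\<close>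

lemma mat2_nth [simp]:
  "mat2 a b c d $ 1 $ 1 = a" "mat2 a b c d $ 1 $ 2 = b"
  "mat2 a b c d $ 2 $ 1 = c" "mat2 a b c d $ 2 $ 2 = d"
  by (simp_all add: mat2_def)

lemma matrix2_eq_iff:
  "(M :: real^2^2) = N \<longleftrightarrow> M$1$1 = N$1$1 \<and> M$1$2 = N$1$2 \<and> M$2$1 = N$2$1 \<and> M$2$2 = N$2$2"
  by (auto simp: vec_eq_iff forall_2)

lemma mat2_of_entries: "(M::real^2^2) = mat2 (M$1$1) (M$1$2) (M$2$1) (M$2$2)"
  by (simp add: matrix2_eq_iff)

lemma mat2_mult:
  "mat2 a b c d ** mat2 a' b' c' d' = mat2 (a*a'+b*c') (a*b'+b*d') (c*a'+d*c') (c*b'+d*d')"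
  by (simp add: matrix2_eq_iff matrix_matrix_mult_def sum_2)

lemma det_mat2: "det (mat2 a b c d) = a*d - b*c"
  by (simp add: det_2)

lemma SL2_iff_entries: "M \<in> SL2 \<longleftrightarrow> M$1$1 * M$2$2 - M$1$2 * M$2$1 = 1"
  by (simp add: SL2_def det_2)

lemma coord_map_mat2:
  "coord_map (t,\<theta>,u) = mat2 (exp t * (cos \<theta> - u * sin \<theta>)) (- exp t * sin \<theta>)
     (exp (-t) * (sin \<theta> + u * cos \<theta>)) (exp (-t) * cos \<theta>)"
  by (simp add: coord_map_def g_diag_def rot_def n_low_def mat2_mult algebra_simps)

lemma coord_map_eq_mat2:
  "coord_map = (\<lambda>p. mat2 (exp (fst p) * (cos (fst (snd p)) - snd (snd p) * sin (fst (snd p))))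
     (- exp (fst p) * sin (fst (snd p)))
     (exp (- fst p) * (sin (fst (snd p)) + snd (snd p) * cos (fst (snd p))))
     (exp (- fst p) * cos (fst (snd p))))"
  by (rule ext, clarify) (simp add: coord_map_mat2)

lemma mem_coord_dom_iff: "p \<in> coord_dom \<longleftrightarrow> \<bar>fst (snd p)\<bar> < pi/4"
  by (cases p) (auto simp: coord_dom_def)

lemma open_coord_dom: "open coord_dom"
  unfolding coord_dom_def by (intro open_Times) auto

lemma cos_pos_if_abs_less_pi_quarter: "\<bar>\<theta>\<bar> < pi/4 \<Longrightarrow> cos \<theta> > 0"
  by (intro cos_gt_zero_pi) auto

lemma coord_map_entries_12_22:
  "coord_map (t,\<theta>,u) $1$2 * coord_map (t,\<theta>,u) $2$2 = - (sin (2*\<theta>) / 2)"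
proof -
  have "(- exp t * sin \<theta>) * (exp (-t) * cos \<theta>) = - ((exp t * exp (-t)) * (sin \<theta> * cos \<theta>))"
    by algebra
  then show ?thesis by (simp add: coord_map_mat2 sin_double exp_minus)
qed

lemma det_coord_map: "det (coord_map (t,\<theta>,u)) = 1"
proof -
  have "det (coord_map (t,\<theta>,u)) = (exp t * exp (-t)) * (sin \<theta> ^2 + cos \<theta> ^2)"
    by (simp only: coord_map_mat2 det_mat2) algebra
  then show ?thesis by (simp add: exp_minus)
qed

definition sl2_of_bcd :: "real \<Rightarrow> real \<Rightarrow> real \<Rightarrow> real^2^2" where
  "sl2_of_bcd b c d = mat2 ((1 + b*c) / d) b c d"

lemma SL2_eq_sl2_of_bcd:
  assumes "M \<in> SL2" "M$2$2 \<noteq> 0"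
  shows "M = sl2_of_bcd (M$1$2) (M$2$1) (M$2$2)"
proof -
  have "M$1$1 = (1 + M$1$2 * M$2$1) / M$2$2"
    using assms by (simp add: SL2_iff_entries field_simps)
  then show ?thesis by (simp add: sl2_of_bcd_def matrix2_eq_iff)
qed

section \<open>The coordinate map is a bijection onto \<open>W\<close>\<close>

lemma abs_sin_less_1: "\<bar>x\<bar> < pi/2 \<Longrightarrow> \<bar>sin x\<bar> < 1"
proof -
  assume "\<bar>x\<bar> < pi/2"
  then have "cos x > 0" by (intro cos_gt_zero_pi) auto
  then have "sin x ^ 2 < 1" using sin_cos_squared_add[of x] by (smt (verit) zero_less_power)
  then show ?thesis by (simp add: abs_square_less_1)
qed

lemma coord_map_in_W_set:
  assumes "\<bar>\<theta>\<bar> < pi/4" shows "coord_map (t,\<theta>,u) \<in> W_set"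
proof -
  have "\<bar>sin (2*\<theta>)\<bar> < 1"
    using assms by (intro abs_sin_less_1) auto
  then show ?thesis
    using cos_pos_if_abs_less_pi_quarter[OF assms] det_coord_map[of t \<theta> u]
    by (simp add: W_set_def SL2_def coord_map_entries_12_22) (simp add: coord_map_mat2)
qed


definition W_nbhd :: "(real^2^2) set" where
  "W_nbhd = {M. M$2$2 > 0 \<and> \<bar>M$1$2 * M$2$2\<bar> < 1/2}"

lemma W_set_eq: "W_set = SL2 \<inter> W_nbhd"
  by (auto simp: W_set_def W_nbhd_def)

lemma open_W_nbhd: "open W_nbhd"
  unfolding W_nbhd_def by (intro open_Collect_conj open_Collect_less continuous_intros)

text \<open>On \<open>W\<close> the entries satisfy \<open>b d = - sin (2\<theta>) / 2\<close>, which determines \<open>\<theta>\<close>; then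
  \<open>d = e\<^sup>-\<^sup>t cos \<theta>\<close> determines \<open>t\<close> and \<open>c / d = tan \<theta> + u\<close> determines \<open>u\<close>.\<close>
definition coord_theta :: "real^2^2 \<Rightarrow> real" where
  "coord_theta M = - arcsin (2 * (M$1$2 * M$2$2)) / 2"

definition coord_inv :: "real^2^2 \<Rightarrow> real \<times> real \<times> real" where
  "coord_inv M = (ln (cos (coord_theta M) / M$2$2), coord_theta M, M$2$1 / M$2$2 - tan (coord_theta M))"

lemma abs_coord_theta_less:
  assumes "\<bar>M$1$2 * M$2$2\<bar> < 1/2" shows "\<bar>coord_theta M\<bar> < pi/4"
proof -
  have "- (pi/2) < arcsin (2 * (M$1$2 * M$2$2))" "arcsin (2 * (M$1$2 * M$2$2)) < pi/2"
    using arcsin_lt_bounded[of "2 * (M$1$2 * M$2$2)"] assms by auto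
  then show ?thesis by (simp add: coord_theta_def abs_less_iff)
qed

lemma cos_coord_theta_pos: "M \<in> W_nbhd \<Longrightarrow> cos (coord_theta M) > 0"
  by (intro cos_pos_if_abs_less_pi_quarter abs_coord_theta_less) (simp add: W_nbhd_def)

lemma sin_cos_coord_theta:
  assumes "\<bar>M$1$2 * M$2$2\<bar> < 1/2"
  shows "sin (coord_theta M) * cos (coord_theta M) = - (M$1$2 * M$2$2)"
proof -
  have "sin (2 * coord_theta M) = - (2 * (M$1$2 * M$2$2))"
    using sin_arcsin[of "2 * (M$1$2 * M$2$2)"] assms by (simp add: coord_theta_def)
  then show ?thesis unfolding sin_double by linarith
qed

lemma coord_inv_coord_map:
  assumes "\<bar>\<theta>\<bar> < pi/4" shows "coord_inv (coord_map (t,\<theta>,u)) = (t,\<theta>,u)"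
proof -
  have "arcsin (sin (2*\<theta>)) = 2*\<theta>" using assms by (intro arcsin_sin) auto
  then have \<theta>: "coord_theta (coord_map (t,\<theta>,u)) = \<theta>"
    by (simp add: coord_theta_def coord_map_entries_12_22 arcsin_minus)
  have "cos \<theta> \<noteq> 0" using cos_pos_if_abs_less_pi_quarter[OF assms] by simp
  then show ?thesis
    by (simp add: coord_inv_def \<theta>) (simp add: coord_map_mat2 tan_def exp_minus field_simps)
qed

lemma coord_map_coord_inv:
  assumes "M \<in> W_set" shows "coord_map (coord_inv M) = M"
proof -
  let ?b = "M$1$2" and ?c = "M$2$1" and ?d = "M$2$2" and ?\<theta> = "coord_theta M"
  have M: "M \<in> SL2" "?d > 0" "\<bar>?b * ?d\<bar> < 1/2" using assms by (auto simp: W_set_def)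
  have c: "cos ?\<theta> > 0" using M by (intro cos_coord_theta_pos) (simp add: W_nbhd_def)
  have sc: "sin ?\<theta> * cos ?\<theta> = - (?b * ?d)" using M(3) by (rule sin_cos_coord_theta)
  let ?N = "coord_map (coord_inv M)"
  have N: "?N = coord_map (ln (cos ?\<theta> / ?d), ?\<theta>, ?c / ?d - tan ?\<theta>)"
    by (simp add: coord_inv_def)
  have "?N$1$2 = ?b" "?N$2$1 = ?c" "?N$2$2 = ?d"
    using M(2) c sc unfolding N coord_map_mat2 mat2_nth
    by (simp_all add: exp_minus tan_def field_simps)
  moreover have "?N \<in> SL2" by (simp add: N SL2_def det_coord_map)
  ultimately have "?N = sl2_of_bcd ?b ?c ?d"
    using SL2_eq_sl2_of_bcd[of ?N] M(2) by simp
  also have "\<dots> = M" using SL2_eq_sl2_of_bcd[OF M(1)] M(2) by simp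
  finally show ?thesis .
qed

lemma coord_inv_in_coord_dom: "M \<in> W_nbhd \<Longrightarrow> coord_inv M \<in> coord_dom"
  using abs_coord_theta_less[of M] by (simp add: mem_coord_dom_iff coord_inv_def W_nbhd_def)

lemma bij_betw_coord_map: "bij_betw coord_map coord_dom W_set"
proof (rule bij_betw_byWitness[where f'=coord_inv])
  show "\<forall>p\<in>coord_dom. coord_inv (coord_map p) = p"
    using coord_inv_coord_map mem_coord_dom_iff by auto
  show "\<forall>M\<in>W_set. coord_map (coord_inv M) = M" using coord_map_coord_inv by auto
  show "coord_map ` coord_dom \<subseteq> W_set" using coord_map_in_W_set mem_coord_dom_iff by auto
  show "coord_inv ` W_set \<subseteq> coord_dom" using coord_inv_in_coord_dom W_set_eq by blast
qed

section \<open>Smoothness of the coordinate map and of its inverse\<close>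

text \<open>Every function in this class has a derivative whose directional components lie in the
  class again (\<open>smooth_fun_has_derivative\<close>), so all its members are \<open>C\<^sup>\<infinity>\<close> on an open \<open>S\<close>.\<close>
inductive_set smooth_fun :: "'a::real_normed_vector set \<Rightarrow> ('a \<Rightarrow> real) set" for S where
  const: "(\<lambda>x. c) \<in> smooth_fun S"
| linear: "bounded_linear L \<Longrightarrow> L \<in> smooth_fun S"
| add: "f \<in> smooth_fun S \<Longrightarrow> g \<in> smooth_fun S \<Longrightarrow> (\<lambda>x. f x + g x) \<in> smooth_fun S"
| mult: "f \<in> smooth_fun S \<Longrightarrow> g \<in> smooth_fun S \<Longrightarrow> (\<lambda>x. f x * g x) \<in> smooth_fun S"
| exp: "f \<in> smooth_fun S \<Longrightarrow> (\<lambda>x. exp (f x)) \<in> smooth_fun S"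
| sin: "f \<in> smooth_fun S \<Longrightarrow> (\<lambda>x. sin (f x)) \<in> smooth_fun S"
| cos: "f \<in> smooth_fun S \<Longrightarrow> (\<lambda>x. cos (f x)) \<in> smooth_fun S"
| inverse: "f \<in> smooth_fun S \<Longrightarrow> (\<And>x. x \<in> S \<Longrightarrow> f x \<noteq> 0) \<Longrightarrow> (\<lambda>x. inverse (f x)) \<in> smooth_fun S"
| sqrt: "f \<in> smooth_fun S \<Longrightarrow> (\<And>x. x \<in> S \<Longrightarrow> f x > 0) \<Longrightarrow> (\<lambda>x. sqrt (f x)) \<in> smooth_fun S"
| ln: "f \<in> smooth_fun S \<Longrightarrow> (\<And>x. x \<in> S \<Longrightarrow> f x > 0) \<Longrightarrow> (\<lambda>x. ln (f x)) \<in> smooth_fun S"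
| arcsin: "f \<in> smooth_fun S \<Longrightarrow> (\<And>x. x \<in> S \<Longrightarrow> \<bar>f x\<bar> < 1) \<Longrightarrow> (\<lambda>x. arcsin (f x)) \<in> smooth_fun S"
| cong: "f \<in> smooth_fun S \<Longrightarrow> (\<And>x. x \<in> S \<Longrightarrow> f x = g x) \<Longrightarrow> g \<in> smooth_fun S"

lemma smooth_fun_uminus: "f \<in> smooth_fun S \<Longrightarrow> (\<lambda>x. - f x) \<in> smooth_fun S"
  by (rule smooth_fun.cong[OF smooth_fun.mult[OF smooth_fun.const[where c="-1"]]]) auto

lemma smooth_fun_diff: "f \<in> smooth_fun S \<Longrightarrow> g \<in> smooth_fun S \<Longrightarrow> (\<lambda>x. f x - g x) \<in> smooth_fun S"
  by (rule smooth_fun.cong[OF smooth_fun.add[OF _ smooth_fun_uminus]]) auto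

lemma smooth_fun_divide:
  "f \<in> smooth_fun S \<Longrightarrow> g \<in> smooth_fun S \<Longrightarrow> (\<And>x. x \<in> S \<Longrightarrow> g x \<noteq> 0) \<Longrightarrow>
    (\<lambda>x. f x / g x) \<in> smooth_fun S"
  by (rule smooth_fun.cong[OF smooth_fun.mult[OF _ smooth_fun.inverse]]) (auto simp: divide_inverse)

lemma smooth_fun_chain:
  assumes f: "\<forall>x\<in>S. (f has_derivative f' x) (at x)" "\<forall>v. (\<lambda>x. f' x v) \<in> smooth_fun S"
    and h: "\<forall>x\<in>S. DERIV h (f x) :> h' x" "h' \<in> smooth_fun S"
  shows "\<exists>F. (\<forall>x\<in>S. ((\<lambda>x. h (f x)) has_derivative F x) (at x)) \<and> (\<forall>v. (\<lambda>x. F x v) \<in> smooth_fun S)"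
proof (intro exI[of _ "\<lambda>x v. f' x v * h' x"] conjI ballI allI)
  fix x assume "x \<in> S"
  then show "((\<lambda>x. h (f x)) has_derivative (\<lambda>v. f' x v * h' x)) (at x)"
    using f h by (auto intro: DERIV_compose_FDERIV)
next
  fix v show "(\<lambda>x. f' x v * h' x) \<in> smooth_fun S"
    by (rule smooth_fun.mult) (use f h in auto)
qed

lemma smooth_fun_has_derivative:
  assumes S: "open S" and "f \<in> smooth_fun S"
  shows "\<exists>f'. (\<forall>x\<in>S. (f has_derivative f' x) (at x)) \<and> (\<forall>v. (\<lambda>x. f' x v) \<in> smooth_fun S)"
  using assms(2)
proof (induction rule: smooth_fun.induct)
  case (const c)
  show ?case by (intro exI[of _ "\<lambda>x v. 0"]) (auto intro: smooth_fun.const)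
next
  case (linear L)
  then show ?case
    by (intro exI[of _ "\<lambda>x. L"]) (auto intro: smooth_fun.const bounded_linear_imp_has_derivative)
next
  case (add f g)
  then obtain f' g' where f: "\<forall>x\<in>S. (f has_derivative f' x) (at x)" "\<forall>v. (\<lambda>x. f' x v) \<in> smooth_fun S"
    and g: "\<forall>x\<in>S. (g has_derivative g' x) (at x)" "\<forall>v. (\<lambda>x. g' x v) \<in> smooth_fun S" by blast
  show ?case
    by (intro exI[of _ "\<lambda>x v. f' x v + g' x v"] conjI allI ballI has_derivative_add smooth_fun.add)
      (use f g in auto)
next
  case (mult f g)
  then obtain f' g' where f: "\<forall>x\<in>S. (f has_derivative f' x) (at x)" "\<forall>v. (\<lambda>x. f' x v) \<in> smooth_fun S"
    and g: "\<forall>x\<in>S. (g has_derivative g' x) (at x)" "\<forall>v. (\<lambda>x. g' x v) \<in> smooth_fun S" by blast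
  show ?case
    by (intro exI[of _ "\<lambda>x v. f x * g' x v + f' x v * g x"] conjI allI ballI has_derivative_mult
        smooth_fun.add smooth_fun.mult) (use f g mult.hyps in auto)
next
  case (exp f)
  then obtain f' where f: "\<forall>x\<in>S. (f has_derivative f' x) (at x)" "\<forall>v. (\<lambda>x. f' x v) \<in> smooth_fun S"
    by blast
  show ?case by (rule smooth_fun_chain[OF f _ smooth_fun.exp[OF exp.hyps]]) (auto intro: DERIV_exp)
next
  case (sin f)
  then obtain f' where f: "\<forall>x\<in>S. (f has_derivative f' x) (at x)" "\<forall>v. (\<lambda>x. f' x v) \<in> smooth_fun S"
    by blast
  show ?case by (rule smooth_fun_chain[OF f _ smooth_fun.cos[OF sin.hyps]]) (auto intro: DERIV_sin)
next
  case (cos f)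
  then obtain f' where f: "\<forall>x\<in>S. (f has_derivative f' x) (at x)" "\<forall>v. (\<lambda>x. f' x v) \<in> smooth_fun S"
    by blast
  have m: "(\<lambda>x. - sin (f x)) \<in> smooth_fun S" by (intro smooth_fun_uminus smooth_fun.sin cos.hyps)
  show ?case by (rule smooth_fun_chain[OF f _ m]) (auto intro: DERIV_cos)
next
  case (inverse f)
  then obtain f' where f: "\<forall>x\<in>S. (f has_derivative f' x) (at x)" "\<forall>v. (\<lambda>x. f' x v) \<in> smooth_fun S"
    by blast
  have i: "(\<lambda>x. inverse (f x)) \<in> smooth_fun S" by (rule smooth_fun.inverse) (use inverse.hyps in auto)
  have "(\<lambda>x. - (inverse (f x) * inverse (f x))) \<in> smooth_fun S"
    by (intro smooth_fun_uminus smooth_fun.mult i)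
  then have m: "(\<lambda>x. - (inverse (f x) ^ Suc (Suc 0))) \<in> smooth_fun S"
    by (simp add: power2_eq_square)
  have "\<forall>x\<in>S. DERIV inverse (f x) :> - (inverse (f x) ^ Suc (Suc 0))"
    using inverse.hyps(2) DERIV_inverse by blast
  then show ?case by (rule smooth_fun_chain[OF f _ m])
next
  case (sqrt f)
  then obtain f' where f: "\<forall>x\<in>S. (f has_derivative f' x) (at x)" "\<forall>v. (\<lambda>x. f' x v) \<in> smooth_fun S"
    by blast
  have m: "(\<lambda>x. inverse (sqrt (f x)) / 2) \<in> smooth_fun S"
    by (intro smooth_fun_divide smooth_fun.inverse smooth_fun.sqrt smooth_fun.const sqrt.hyps)
      (use sqrt.hyps(2) in force)+
  show ?case
    by (rule smooth_fun_chain[OF f _ m]) (use sqrt.hyps(2) in \<open>auto intro: DERIV_real_sqrt\<close>)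
next
  case (ln f)
  then obtain f' where f: "\<forall>x\<in>S. (f has_derivative f' x) (at x)" "\<forall>v. (\<lambda>x. f' x v) \<in> smooth_fun S"
    by blast
  have m: "(\<lambda>x. 1 / f x) \<in> smooth_fun S"
    by (intro smooth_fun_divide smooth_fun.const ln.hyps) (use ln.hyps(2) in force)
  show ?case
    by (rule smooth_fun_chain[OF f _ m]) (use ln.hyps(2) in \<open>auto intro: DERIV_ln_divide\<close>)
next
  case (arcsin f)
  then obtain f' where f: "\<forall>x\<in>S. (f has_derivative f' x) (at x)" "\<forall>v. (\<lambda>x. f' x v) \<in> smooth_fun S"
    by blast
  have pos: "1 - f x * f x > 0" if "x \<in> S" for x
  proof -
    have "\<bar>f x\<bar> * \<bar>f x\<bar> < 1 * 1" using arcsin.hyps(2)[OF that] by (intro mult_strict_mono) auto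
    then show ?thesis by (simp add: abs_mult[symmetric])
  qed
  have "(\<lambda>x. inverse (sqrt (1 - f x * f x))) \<in> smooth_fun S"
    by (intro smooth_fun.inverse smooth_fun.sqrt smooth_fun_diff smooth_fun.const smooth_fun.mult
        arcsin.hyps) (use pos in force)+
  then have m: "(\<lambda>x. inverse (sqrt (1 - (f x)\<^sup>2))) \<in> smooth_fun S"
    by (simp add: power2_eq_square)
  show ?case
    by (rule smooth_fun_chain[OF f _ m])
      (use arcsin.hyps(2) in \<open>auto intro: DERIV_arcsin simp: abs_less_iff\<close>)
next
  case (cong f g)
  then obtain f' where f: "\<forall>x\<in>S. (f has_derivative f' x) (at x)" "\<forall>v. (\<lambda>x. f' x v) \<in> smooth_fun S"
    by blast
  have "\<forall>x\<in>S. (g has_derivative f' x) (at x)"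
    using f cong.hyps(2) S by (auto intro: has_derivative_transform_within_open)
  then show ?case using f by blast
qed

lemma cont_diff_smooth_fun:
  assumes S: "open S"
  shows "f \<in> smooth_fun S \<Longrightarrow> cont_diff k S f"
proof (induction k arbitrary: f)
  case 0
  then obtain f' where "\<forall>x\<in>S. (f has_derivative f' x) (at x)"
    using smooth_fun_has_derivative[OF S] by blast
  then show ?case by (auto intro!: continuous_at_imp_continuous_on has_derivative_continuous)
next
  case (Suc k)
  then obtain f' where f: "\<forall>x\<in>S. (f has_derivative f' x) (at x)" "\<forall>v. (\<lambda>x. f' x v) \<in> smooth_fun S"
    using smooth_fun_has_derivative[OF S] by blast
  have "(\<lambda>x. frechet_derivative f (at x) v) \<in> smooth_fun S" for v
  proof (rule smooth_fun.cong[OF f(2)[rule_format, of v]])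
    fix x assume "x \<in> S"
    then show "f' x v = frechet_derivative f (at x) v"
      using f(1) frechet_derivative_at by metis
  qed
  then show ?case using f(1) Suc.IH by (auto simp: differentiable_def)
qed

lemma cont_diff_cong:
  assumes S: "open S"
  shows "(\<And>x. x \<in> S \<Longrightarrow> f x = g x) \<Longrightarrow> cont_diff k S f = cont_diff k S g"
proof (induction k arbitrary: f g)
  case 0
  then show ?case by (auto intro: continuous_on_cong)
next
  case (Suc k)
  have diff: "f differentiable (at x) \<longleftrightarrow> g differentiable (at x)" if "x \<in> S" for x
    unfolding differentiable_def using Suc.prems S that
    by (metis has_derivative_transform_within_open)
  have deriv: "frechet_derivative f (at x) = frechet_derivative g (at x)"
    if "x \<in> S" "f differentiable (at x)" for x
  proof -
    have "(g has_derivative frechet_derivative f (at x)) (at x)"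
      using that Suc.prems S frechet_derivative_works
      by (blast intro: has_derivative_transform_within_open)
    then show ?thesis by (rule frechet_derivative_at)
  qed
  show ?case
  proof (cases "\<forall>x\<in>S. f differentiable (at x)")
    case True
    have "cont_diff k S (\<lambda>x. frechet_derivative f (at x) v) = cont_diff k S (\<lambda>x. frechet_derivative g (at x) v)"
      for v by (rule Suc.IH) (use True deriv in auto)
    then show ?thesis using True diff by auto
  qed (use diff in auto)
qed

lemma cont_diff_add:
  assumes S: "open S"
  shows "cont_diff k S f \<Longrightarrow> cont_diff k S g \<Longrightarrow> cont_diff k S (\<lambda>x. f x + g x)"
proof (induction k arbitrary: f g)
  case 0
  then show ?case by (auto intro: continuous_on_add)
next
  case (Suc k)
  have "frechet_derivative (\<lambda>x. f x + g x) (at x) v =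
      frechet_derivative f (at x) v + frechet_derivative g (at x) v" if "x \<in> S" for x v
  proof -
    have "((\<lambda>x. f x + g x) has_derivative
        (\<lambda>v. frechet_derivative f (at x) v + frechet_derivative g (at x) v)) (at x)"
      using Suc.prems that by (auto intro!: has_derivative_add simp: frechet_derivative_works[symmetric])
    then show ?thesis by (simp add: frechet_derivative_at[symmetric])
  qed
  then have "cont_diff k S (\<lambda>x. frechet_derivative (\<lambda>x. f x + g x) (at x) v)" for v
    using cont_diff_cong[OF S, of "\<lambda>x. frechet_derivative (\<lambda>x. f x + g x) (at x) v"
        "\<lambda>x. frechet_derivative f (at x) v + frechet_derivative g (at x) v"] Suc by auto
  then show ?case using Suc.prems by auto
qed

lemma cont_diff_scaleR_const_right:
  fixes w :: "'b::real_normed_vector"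
  assumes S: "open S"
  shows "cont_diff k S f \<Longrightarrow> cont_diff k S (\<lambda>x. f x *\<^sub>R w)"
proof (induction k arbitrary: f)
  case 0
  then show ?case by (auto intro: continuous_on_scaleR)
next
  case (Suc k)
  have "frechet_derivative (\<lambda>x. f x *\<^sub>R w) (at x) v = frechet_derivative f (at x) v *\<^sub>R w"
    if "x \<in> S" for x v
  proof -
    have "((\<lambda>x. f x *\<^sub>R w) has_derivative (\<lambda>v. frechet_derivative f (at x) v *\<^sub>R w)) (at x)"
      using Suc.prems that
      by (auto intro!: derivative_eq_intros simp: frechet_derivative_works[symmetric])
    then show ?thesis by (simp add: frechet_derivative_at[symmetric])
  qed
  then have "cont_diff k S (\<lambda>x. frechet_derivative (\<lambda>x. f x *\<^sub>R w) (at x) v)" for v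
    using cont_diff_cong[OF S, of "\<lambda>x. frechet_derivative (\<lambda>x. f x *\<^sub>R w) (at x) v"
        "\<lambda>x. frechet_derivative f (at x) v *\<^sub>R w"] Suc by auto
  then show ?case using Suc.prems by auto
qed

lemma smooth_on_add:
  "open S \<Longrightarrow> smooth_on S f \<Longrightarrow> smooth_on S g \<Longrightarrow> smooth_on S (\<lambda>x. f x + g x)"
  unfolding smooth_on_def by (blast intro: cont_diff_add)

lemma smooth_on_scaleR_smooth_fun:
  "open S \<Longrightarrow> f \<in> smooth_fun S \<Longrightarrow> smooth_on S (\<lambda>x. f x *\<^sub>R w)"
  unfolding smooth_on_def by (blast intro: cont_diff_scaleR_const_right cont_diff_smooth_fun)

lemma smooth_fun_fst: "fst \<in> smooth_fun S"
  by (rule smooth_fun.linear) (rule bounded_linear_fst)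

lemma smooth_fun_fst_snd: "(\<lambda>p. fst (snd p)) \<in> smooth_fun S"
  by (rule smooth_fun.linear) (rule bounded_linear_compose[OF bounded_linear_fst bounded_linear_snd])

lemma smooth_fun_snd_snd: "(\<lambda>p. snd (snd p)) \<in> smooth_fun S"
  by (rule smooth_fun.linear) (rule bounded_linear_compose[OF bounded_linear_snd bounded_linear_snd])

lemma smooth_fun_matrix_entry: "(\<lambda>M::real^2^2. M $ i $ j) \<in> smooth_fun S"
  by (rule smooth_fun.linear) (rule bounded_linear_compose[OF bounded_linear_vec_nth bounded_linear_vec_nth])

lemma mat2_eq_sum_scaleR:
  "mat2 a b c d = a *\<^sub>R mat2 1 0 0 0 + b *\<^sub>R mat2 0 1 0 0 + c *\<^sub>R mat2 0 0 1 0 + d *\<^sub>R mat2 0 0 0 1"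
  by (simp add: matrix2_eq_iff)

lemma smooth_on_coord_map: "smooth_on coord_dom coord_map"
  unfolding coord_map_eq_mat2
  by (subst mat2_eq_sum_scaleR, intro smooth_on_add smooth_on_scaleR_smooth_fun open_coord_dom smooth_fun.mult smooth_fun.exp
      smooth_fun_diff smooth_fun.add smooth_fun.sin smooth_fun.cos smooth_fun_uminus smooth_fun_fst
      smooth_fun_fst_snd smooth_fun_snd_snd)

lemma smooth_fun_coord_theta: "coord_theta \<in> smooth_fun W_nbhd"
  unfolding coord_theta_def[abs_def]
  by (intro smooth_fun_divide smooth_fun_uminus smooth_fun.arcsin smooth_fun.mult smooth_fun.const
      smooth_fun_matrix_entry) (auto simp: W_nbhd_def)

lemma smooth_on_coord_inv: "smooth_on W_nbhd coord_inv"
proof -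
  have eq: "coord_inv = (\<lambda>M. ln (cos (coord_theta M) / M$2$2) *\<^sub>R (1,0,0) + coord_theta M *\<^sub>R (0,1,0) +
     (M$2$1 / M$2$2 - sin (coord_theta M) / cos (coord_theta M)) *\<^sub>R (0,0,1))"
    by (rule ext) (simp add: coord_inv_def tan_def)
  show ?thesis
    unfolding eq using cos_coord_theta_pos[unfolded W_nbhd_def mem_Collect_eq]
    by (intro smooth_on_add smooth_on_scaleR_smooth_fun open_W_nbhd smooth_fun.ln smooth_fun_divide
        smooth_fun_diff smooth_fun.cos smooth_fun.sin smooth_fun_coord_theta smooth_fun_matrix_entry)
      (force simp: W_nbhd_def)+
qed

lemma borel_measurable_fst [measurable]:
  "(fst :: 'a::topological_space \<times> 'b::topological_space \<Rightarrow> 'a) \<in> borel_measurable borel"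
  by (intro borel_measurable_continuous_onI continuous_on_fst continuous_on_id)

lemma borel_measurable_snd [measurable]:
  "(snd :: 'a::topological_space \<times> 'b::topological_space \<Rightarrow> 'b) \<in> borel_measurable borel"
  by (intro borel_measurable_continuous_onI continuous_on_snd continuous_on_id)

lemma nn_integral_lborel_translate:
  fixes c :: "'a::euclidean_space"
  assumes [measurable]: "f \<in> borel_measurable borel"
  shows "(\<integral>\<^sup>+x. f (c + x) \<partial>lborel) = (\<integral>\<^sup>+x. f x \<partial>lborel)"
proof -
  have "(\<integral>\<^sup>+x. f x \<partial>lborel) = (\<integral>\<^sup>+x. f x \<partial>distr lborel borel ((+) c))"
    by (simp add: lborel_distr_plus)
  also have "\<dots> = (\<integral>\<^sup>+x. f (c + x) \<partial>lborel)"
    by (subst nn_integral_distr) auto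
  finally show ?thesis ..
qed

lemma nn_integral_lborel_scaleR:
  fixes c :: real
  assumes [measurable]: "f \<in> borel_measurable (borel :: 'a::euclidean_space measure)" and c: "c \<noteq> 0"
  shows "(\<integral>\<^sup>+x. f x \<partial>lborel) = ennreal (\<bar>c\<bar> ^ DIM('a)) * (\<integral>\<^sup>+x. f (c *\<^sub>R x) \<partial>lborel)"
proof -
  have "(\<integral>\<^sup>+x. f x \<partial>lborel) =
      (\<integral>\<^sup>+x. f x \<partial>density (distr lborel borel (\<lambda>x. 0 + c *\<^sub>R x)) (\<lambda>_. ennreal (\<bar>c\<bar> ^ DIM('a))))"
    by (simp only: lborel_affine[OF c, symmetric])
  also have "\<dots> = (\<integral>\<^sup>+x. ennreal (\<bar>c\<bar> ^ DIM('a)) * f (c *\<^sub>R x) \<partial>lborel)"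
    by (simp add: nn_integral_density nn_integral_distr)
  also have "\<dots> = ennreal (\<bar>c\<bar> ^ DIM('a)) * (\<integral>\<^sup>+x. f (c *\<^sub>R x) \<partial>lborel)"
    by (rule nn_integral_cmult) measurable
  finally show ?thesis .
qed

lemma nn_integral_lborel_pair:
  fixes f :: "'a::euclidean_space \<times> 'b::euclidean_space \<Rightarrow> ennreal"
  assumes [measurable]: "f \<in> borel_measurable borel"
  shows "(\<integral>\<^sup>+x. f x \<partial>lborel) = (\<integral>\<^sup>+x1. \<integral>\<^sup>+x2. f (x1, x2) \<partial>lborel \<partial>lborel)"
    and "(\<integral>\<^sup>+x. f x \<partial>lborel) = (\<integral>\<^sup>+x2. \<integral>\<^sup>+x1. f (x1, x2) \<partial>lborel \<partial>lborel)"
proof -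
  have m: "f \<in> borel_measurable (lborel \<Otimes>\<^sub>M lborel)" by (simp add: lborel_prod)
  show "(\<integral>\<^sup>+x. f x \<partial>lborel) = (\<integral>\<^sup>+x1. \<integral>\<^sup>+x2. f (x1, x2) \<partial>lborel \<partial>lborel)"
    using lborel.nn_integral_fst[OF m] by (simp add: lborel_prod)
  show "(\<integral>\<^sup>+x. f x \<partial>lborel) = (\<integral>\<^sup>+x2. \<integral>\<^sup>+x1. f (x1, x2) \<partial>lborel \<partial>lborel)"
    using lborel_pair.nn_integral_snd[OF m] by (simp add: lborel_prod)
qed

lemma nn_integral_lborel_swap:
  fixes f :: "'a::euclidean_space \<Rightarrow> 'b::euclidean_space \<Rightarrow> ennreal"
  assumes [measurable]: "(\<lambda>p. f (fst p) (snd p)) \<in> borel_measurable borel"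
  shows "(\<integral>\<^sup>+x. \<integral>\<^sup>+y. f x y \<partial>lborel \<partial>lborel) = (\<integral>\<^sup>+y. \<integral>\<^sup>+x. f x y \<partial>lborel \<partial>lborel)"
  using nn_integral_lborel_pair[of "\<lambda>p. f (fst p) (snd p)"] by simp

lemma nn_integral_lborel_triple:
  assumes [measurable]: "f \<in> borel_measurable (borel :: (real \<times> real \<times> real) measure)"
  shows "(\<integral>\<^sup>+y. f y \<partial>lborel) = (\<integral>\<^sup>+x. \<integral>\<^sup>+y. \<integral>\<^sup>+z. f (x, y, z) \<partial>lborel \<partial>lborel \<partial>lborel)"
  by (simp add: nn_integral_lborel_pair(1)[of f] nn_integral_lborel_pair(1)[of "\<lambda>z. f (_, z)"])

definition preserves_lborel :: "('a::euclidean_space \<Rightarrow> 'a) \<Rightarrow> bool" where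
  "preserves_lborel L \<longleftrightarrow> L \<in> borel_measurable borel \<and>
     (\<forall>f \<in> borel_measurable borel. (\<integral>\<^sup>+x. f (L x) \<partial>lborel) = (\<integral>\<^sup>+x. f x \<partial>lborel))"

lemma nn_integral_preserves_lborel:
  "preserves_lborel L \<Longrightarrow> f \<in> borel_measurable borel \<Longrightarrow>
    (\<integral>\<^sup>+x. f (L x) \<partial>lborel) = (\<integral>\<^sup>+x. f x \<partial>lborel)"
  by (simp add: preserves_lborel_def)

lemma preserves_lborel_comp:
  assumes "preserves_lborel L1" "preserves_lborel L2"
  shows "preserves_lborel (\<lambda>x. L1 (L2 x))"
proof -
  have [measurable]: "L1 \<in> borel_measurable borel" "L2 \<in> borel_measurable borel"
    using assms by (auto simp: preserves_lborel_def)
  show ?thesis unfolding preserves_lborel_def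
  proof (intro conjI ballI)
    fix f :: "'a \<Rightarrow> ennreal" assume [measurable]: "f \<in> borel_measurable borel"
    have "(\<integral>\<^sup>+x. f (L1 (L2 x)) \<partial>lborel) = (\<integral>\<^sup>+x. f (L1 x) \<partial>lborel)"
      by (rule nn_integral_preserves_lborel[OF assms(2)]) measurable
    also have "\<dots> = (\<integral>\<^sup>+x. f x \<partial>lborel)"
      by (rule nn_integral_preserves_lborel[OF assms(1)]) measurable
    finally show "(\<integral>\<^sup>+x. f (L1 (L2 x)) \<partial>lborel) = (\<integral>\<^sup>+x. f x \<partial>lborel)" .
  qed measurable
qed

lemma preserves_lborel_shear_lower:
  "preserves_lborel (\<lambda>x::'a::euclidean_space \<times> 'a. (fst x, snd x + r *\<^sub>R fst x))"
  unfolding preserves_lborel_def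
proof (intro conjI ballI)
  fix f :: "'a \<times> 'a \<Rightarrow> ennreal" assume [measurable]: "f \<in> borel_measurable borel"
  have "(\<integral>\<^sup>+x. f (fst x, snd x + r *\<^sub>R fst x) \<partial>lborel) =
      (\<integral>\<^sup>+x1. \<integral>\<^sup>+x2. f (x1, r *\<^sub>R x1 + x2) \<partial>lborel \<partial>lborel)"
    by (subst nn_integral_lborel_pair(1)) (auto simp: add.commute)
  also have "\<dots> = (\<integral>\<^sup>+x1. \<integral>\<^sup>+x2. f (x1, x2) \<partial>lborel \<partial>lborel)"
    by (intro nn_integral_cong nn_integral_lborel_translate) measurable
  also have "\<dots> = (\<integral>\<^sup>+x. f x \<partial>lborel)" by (subst nn_integral_lborel_pair(1)) auto
  finally show "(\<integral>\<^sup>+x. f (fst x, snd x + r *\<^sub>R fst x) \<partial>lborel) = (\<integral>\<^sup>+x. f x \<partial>lborel)" .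
qed measurable

lemma preserves_lborel_shear_upper:
  "preserves_lborel (\<lambda>x::'a::euclidean_space \<times> 'a. (fst x + r *\<^sub>R snd x, snd x))"
  unfolding preserves_lborel_def
proof (intro conjI ballI)
  fix f :: "'a \<times> 'a \<Rightarrow> ennreal" assume [measurable]: "f \<in> borel_measurable borel"
  have "(\<integral>\<^sup>+x. f (fst x + r *\<^sub>R snd x, snd x) \<partial>lborel) =
      (\<integral>\<^sup>+x2. \<integral>\<^sup>+x1. f (r *\<^sub>R x2 + x1, x2) \<partial>lborel \<partial>lborel)"
    by (subst nn_integral_lborel_pair(2)) (auto simp: add.commute)
  also have "\<dots> = (\<integral>\<^sup>+x2. \<integral>\<^sup>+x1. f (x1, x2) \<partial>lborel \<partial>lborel)"
    by (intro nn_integral_cong nn_integral_lborel_translate[of "\<lambda>x1. f (x1, _)"]) measurable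
  also have "\<dots> = (\<integral>\<^sup>+x. f x \<partial>lborel)" by (subst nn_integral_lborel_pair(2)) auto
  finally show "(\<integral>\<^sup>+x. f (fst x + r *\<^sub>R snd x, snd x) \<partial>lborel) = (\<integral>\<^sup>+x. f x \<partial>lborel)" .
qed measurable

lemma preserves_lborel_scale_inverse:
  assumes l: "l \<noteq> 0"
  shows "preserves_lborel (\<lambda>x::'a::euclidean_space \<times> 'a. (l *\<^sub>R fst x, (1/l) *\<^sub>R snd x))"
  unfolding preserves_lborel_def
proof (intro conjI ballI)
  fix f :: "'a \<times> 'a \<Rightarrow> ennreal" assume [measurable]: "f \<in> borel_measurable borel"
  define K where "K = ennreal (\<bar>l\<bar> ^ DIM('a))"
  define K' where "K' = ennreal (\<bar>1/l\<bar> ^ DIM('a))"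
  have "\<bar>l\<bar> ^ DIM('a) * \<bar>1/l\<bar> ^ DIM('a) = 1"
    using l by (simp add: power_mult_distrib[symmetric] abs_mult[symmetric])
  then have KK': "K * K' = 1" unfolding K_def K'_def by (simp add: ennreal_mult'[symmetric])
  have "(\<integral>\<^sup>+x. f (l *\<^sub>R fst x, (1/l) *\<^sub>R snd x) \<partial>lborel) =
      (\<integral>\<^sup>+x1. \<integral>\<^sup>+x2. f (l *\<^sub>R x1, (1/l) *\<^sub>R x2) \<partial>lborel \<partial>lborel)"
    by (subst nn_integral_lborel_pair(1)) auto
  also have "\<dots> = (\<integral>\<^sup>+x1. K * \<integral>\<^sup>+x2. f (l *\<^sub>R x1, x2) \<partial>lborel \<partial>lborel)"
  proof (rule nn_integral_cong)
    fix x1 :: 'a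
    have "(\<integral>\<^sup>+x2. f (l *\<^sub>R x1, x2) \<partial>lborel) = K' * (\<integral>\<^sup>+x2. f (l *\<^sub>R x1, (1/l) *\<^sub>R x2) \<partial>lborel)"
      unfolding K'_def by (rule nn_integral_lborel_scaleR) (use l in auto)
    then show "(\<integral>\<^sup>+x2. f (l *\<^sub>R x1, (1/l) *\<^sub>R x2) \<partial>lborel) = K * \<integral>\<^sup>+x2. f (l *\<^sub>R x1, x2) \<partial>lborel"
      by (simp only: mult.assoc[symmetric] KK' mult_1)
  qed
  also have "\<dots> = K * (\<integral>\<^sup>+x1. \<integral>\<^sup>+x2. f (l *\<^sub>R x1, x2) \<partial>lborel \<partial>lborel)"
    by (rule nn_integral_cmult) measurable
  also have "\<dots> = (\<integral>\<^sup>+x1. \<integral>\<^sup>+x2. f (x1, x2) \<partial>lborel \<partial>lborel)"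
    unfolding K_def by (rule nn_integral_lborel_scaleR[OF _ l, symmetric]) measurable
  also have "\<dots> = (\<integral>\<^sup>+x. f x \<partial>lborel)" by (subst nn_integral_lborel_pair(1)) auto
  finally show "(\<integral>\<^sup>+x. f (l *\<^sub>R fst x, (1/l) *\<^sub>R snd x) \<partial>lborel) = (\<integral>\<^sup>+x. f x \<partial>lborel)" .
qed measurable

lemma emeasure_lborel_open_pos:
  fixes S :: "'a::euclidean_space set"
  assumes "open S" "x \<in> S"
  shows "0 < emeasure lborel S"
proof -
  obtain a b where ab: "box a b \<subseteq> S" "x \<in> box a b" "\<forall>i\<in>Basis. a \<bullet> i < b \<bullet> i"
    using open_contains_box[OF assms] by blast
  have "0 < emeasure lborel (box a b)"
    using ab(3) by (auto simp: emeasure_lborel_box_eq intro!: prod_pos simp: algebra_simps)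
  also have "\<dots> \<le> emeasure lborel S"
    by (rule emeasure_mono[OF ab(1)]) (simp add: borel_open assms(1))
  finally show ?thesis .
qed

section \<open>A Haar measure on \<open>SL(2,\<real>)\<close>\<close>

text \<open>A matrix \<open>((a,b),(c,d))\<close> given by its rows, as a point of \<open>\<real>\<^sup>2 \<times> \<real>\<^sup>2\<close> with Lebesgue measure.\<close>
type_synonym mat_rows = "(real \<times> real) \<times> (real \<times> real)"

definition rows_det :: "mat_rows \<Rightarrow> real" where
  "rows_det x = fst (fst x) * snd (snd x) - snd (fst x) * fst (snd x)"

definition normalize_rows :: "mat_rows \<Rightarrow> real^2^2" where
  "normalize_rows x = mat2 (fst (fst x) / sqrt (rows_det x)) (snd (fst x) / sqrt (rows_det x))
     (fst (snd x) / sqrt (rows_det x)) (snd (snd x) / sqrt (rows_det x))"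

definition haar_density :: "mat_rows \<Rightarrow> ennreal" where
  "haar_density x = 2 * indicator {x. 0 < rows_det x \<and> rows_det x \<le> 1} x"

text \<open>Left multiplication by \<open>SL(2,\<real>)\<close> preserves Lebesgue measure, the cone and the projection,
  whence invariance; the factor \<open>2\<close> makes the density in the coordinates \<open>(t,\<theta>,u)\<close> exactly \<open>cos 2\<theta>\<close>.\<close>
definition haar_mu :: "(real^2^2) measure" where
  "haar_mu = distr (density lborel haar_density) borel normalize_rows"

lemma borel_measurable_mat2 [measurable]:
  assumes [measurable]: "f1 \<in> borel_measurable M" "f2 \<in> borel_measurable M"
    "f3 \<in> borel_measurable M" "f4 \<in> borel_measurable M"
  shows "(\<lambda>x. mat2 (f1 x) (f2 x) (f3 x) (f4 x)) \<in> borel_measurable M"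
  by (subst mat2_eq_sum_scaleR) measurable

lemma borel_measurable_matrix_entry [measurable]: "(\<lambda>M::real^2^2. M $ i $ j) \<in> borel_measurable borel"
  by (intro borel_measurable_continuous_onI continuous_intros)

lemma borel_measurable_rows_det [measurable]: "rows_det \<in> borel_measurable borel"
  unfolding rows_det_def[abs_def] by measurable

lemma borel_measurable_normalize_rows [measurable]: "normalize_rows \<in> borel_measurable borel"
  unfolding normalize_rows_def[abs_def] by measurable

lemma borel_measurable_haar_density [measurable]: "haar_density \<in> borel_measurable borel"
  unfolding haar_density_def[abs_def] by measurable

lemma SL2_sets_borel [measurable]: "SL2 \<in> sets borel"
proof -
  have eq: "SL2 = {M. M$1$1 * M$2$2 - M$1$2 * M$2$1 = 1}" using SL2_iff_entries by blast
  show ?thesis unfolding eq by measurable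
qed

lemma sets_haar_mu: "sets haar_mu = sets borel"
  by (simp add: haar_mu_def)

lemma emeasure_haar_mu:
  assumes [measurable]: "A \<in> sets borel"
  shows "emeasure haar_mu A = (\<integral>\<^sup>+x. haar_density x * indicator A (normalize_rows x) \<partial>lborel)"
proof -
  have "emeasure haar_mu A = emeasure (density lborel haar_density) (normalize_rows -` A)"
    unfolding haar_mu_def by (subst emeasure_distr) auto
  also have "\<dots> = (\<integral>\<^sup>+x. haar_density x * indicator (normalize_rows -` A) x \<partial>lborel)"
    by (subst emeasure_density) (use measurable_sets_borel[OF borel_measurable_normalize_rows assms] in auto)
  finally show ?thesis by (simp add: indicator_def)
qed

lemma haar_density_nonzero: "haar_density x \<noteq> 0 \<Longrightarrow> 0 < rows_det x \<and> rows_det x \<le> 1"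
  by (auto simp: haar_density_def indicator_def split: if_splits)

lemma det_normalize_rows: "0 < rows_det x \<Longrightarrow> det (normalize_rows x) = 1"
proof -
  assume p: "0 < rows_det x"
  have "det (normalize_rows x) = rows_det x / (sqrt (rows_det x) * sqrt (rows_det x))"
    by (simp add: normalize_rows_def det_mat2 rows_det_def diff_divide_distrib)
  then show ?thesis using p by simp
qed

definition rows_left_mult :: "real^2^2 \<Rightarrow> mat_rows \<Rightarrow> mat_rows" where
  "rows_left_mult g x =
     ((g$1$1 * fst (fst x) + g$1$2 * fst (snd x), g$1$1 * snd (fst x) + g$1$2 * snd (snd x)),
      (g$2$1 * fst (fst x) + g$2$2 * fst (snd x), g$2$1 * snd (fst x) + g$2$2 * snd (snd x)))"

lemma rows_left_mult_mult: "rows_left_mult (g ** h) x = rows_left_mult g (rows_left_mult h x)"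
  by (subst (1 2) mat2_of_entries[of g], subst (1 2) mat2_of_entries[of h])
    (simp add: rows_left_mult_def mat2_mult algebra_simps)

lemma rows_left_mult_lower_shear: "rows_left_mult (mat2 1 0 r 1) = (\<lambda>x. (fst x, snd x + r *\<^sub>R fst x))"
  by (auto simp: rows_left_mult_def algebra_simps prod_eq_iff)

lemma rows_left_mult_upper_shear: "rows_left_mult (mat2 1 q 0 1) = (\<lambda>x. (fst x + q *\<^sub>R snd x, snd x))"
  by (auto simp: rows_left_mult_def algebra_simps prod_eq_iff)

lemma rows_left_mult_diag: "rows_left_mult (mat2 l 0 0 (1/l)) = (\<lambda>x. (l *\<^sub>R fst x, (1/l) *\<^sub>R snd x))"
  by (auto simp: rows_left_mult_def algebra_simps prod_eq_iff)

lemma preserves_lborel_rows_left_mult_if_11_nonzero: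
  assumes "det (mat2 p q r s) = 1" "p \<noteq> 0"
  shows "preserves_lborel (rows_left_mult (mat2 p q r s))"
proof -
  have "mat2 p q r s = mat2 1 0 (r/p) 1 ** (mat2 p 0 0 (1/p) ** mat2 1 (q/p) 0 1)"
    using assms by (simp add: det_mat2 mat2_mult matrix2_eq_iff field_simps)
  then have "rows_left_mult (mat2 p q r s) = (\<lambda>x. rows_left_mult (mat2 1 0 (r/p) 1)
      (rows_left_mult (mat2 p 0 0 (1/p)) (rows_left_mult (mat2 1 (q/p) 0 1) x)))"
    by (simp add: rows_left_mult_mult[abs_def])
  then show ?thesis
    unfolding rows_left_mult_lower_shear rows_left_mult_upper_shear rows_left_mult_diag
    by (simp only:) (rule preserves_lborel_comp[OF preserves_lborel_shear_lower
        preserves_lborel_comp[OF preserves_lborel_scale_inverse[OF assms(2)] preserves_lborel_shear_upper]])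
qed

lemma preserves_lborel_rows_left_mult:
  assumes "det g = 1" shows "preserves_lborel (rows_left_mult g)"
proof -
  obtain p q r s where g: "g = mat2 p q r s" by (metis mat2_of_entries)
  show ?thesis
  proof (cases "p = 0")
    case False
    then show ?thesis using preserves_lborel_rows_left_mult_if_11_nonzero assms g by simp
  next
    case True
    have "mat2 p q r s = mat2 1 (-1) 0 1 ** mat2 r (q + s) r s" using True by (simp add: mat2_mult)
    then have "rows_left_mult g = (\<lambda>x. rows_left_mult (mat2 1 (-1) 0 1) (rows_left_mult (mat2 r (q + s) r s) x))"
      by (simp add: g rows_left_mult_mult[abs_def])
    moreover have "preserves_lborel (rows_left_mult (mat2 r (q + s) r s))"
      using assms g True by (intro preserves_lborel_rows_left_mult_if_11_nonzero) (auto simp: det_mat2 algebra_simps)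
    ultimately show ?thesis
      unfolding rows_left_mult_upper_shear by (simp only:) (rule preserves_lborel_comp[OF preserves_lborel_shear_upper])
  qed
qed

lemma rows_det_rows_left_mult: "rows_det (rows_left_mult g x) = det g * rows_det x"
  by (simp add: rows_det_def rows_left_mult_def det_2 algebra_simps)

lemma normalize_rows_rows_left_mult:
  assumes "det g = 1" shows "normalize_rows (rows_left_mult g x) = g ** normalize_rows x"
proof -
  have "rows_det (rows_left_mult g x) = rows_det x" using assms by (simp add: rows_det_rows_left_mult)
  then show ?thesis
    by (subst mat2_of_entries[of g], unfold normalize_rows_def)
      (simp add: rows_left_mult_def mat2_mult add_divide_distrib)
qed

lemma haar_density_rows_left_mult:
  "det g = 1 \<Longrightarrow> haar_density (rows_left_mult g x) = haar_density x"
  by (simp add: haar_density_def rows_det_rows_left_mult indicator_def)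

lemma borel_measurable_matrix_mult_left [measurable]:
  "(\<lambda>M::real^2^2. h ** M) \<in> borel_measurable borel"
proof -
  have "linear ((**) h)" by (auto simp: linear_iff matrix_add_ldistrib matrix_scalar_ac scalar_matrix_assoc)
  then show ?thesis
    by (intro borel_measurable_continuous_onI linear_continuous_on) (simp add: linear_conv_bounded_linear)
qed

lemma haar_mu_left_invariant:
  assumes g: "g \<in> SL2" and A [measurable]: "A \<in> sets borel"
  shows "emeasure haar_mu ((\<lambda>x. g ** x) ` A) = emeasure haar_mu A"
proof -
  have dg: "det g = 1" using g by (simp add: SL2_def)
  then obtain h where h: "g ** h = mat 1" "h ** g = mat 1"
    using invertible_det_nz[of g] by (auto simp: invertible_def)
  have dh: "det h = 1" using det_mul[of g h] dg h(1) by simp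
  have img: "(\<lambda>x. g ** x) ` A = (\<lambda>M. h ** M) -` A"
    using h by (force simp: matrix_mul_assoc)
  have "emeasure haar_mu ((\<lambda>x. g ** x) ` A) =
      (\<integral>\<^sup>+x. haar_density x * indicator ((\<lambda>M. h ** M) -` A) (normalize_rows x) \<partial>lborel)"
    unfolding img by (rule emeasure_haar_mu)
      (rule measurable_sets_borel[OF borel_measurable_matrix_mult_left A])
  also have "\<dots> = (\<integral>\<^sup>+x. (\<lambda>y. haar_density y * indicator A (normalize_rows y)) (rows_left_mult h x) \<partial>lborel)"
    by (simp add: haar_density_rows_left_mult[OF dh] normalize_rows_rows_left_mult[OF dh] indicator_def)
  also have "\<dots> = (\<integral>\<^sup>+x. haar_density x * indicator A (normalize_rows x) \<partial>lborel)"
    by (rule nn_integral_preserves_lborel[OF preserves_lborel_rows_left_mult[OF dh]]) measurable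
  also have "\<dots> = emeasure haar_mu A" by (rule emeasure_haar_mu[symmetric]) measurable
  finally show ?thesis .
qed

lemma haar_mu_outside_SL2: "emeasure haar_mu (UNIV - SL2) = 0"
proof -
  have "haar_density x * indicator (UNIV - SL2) (normalize_rows x) = 0" for x
    using haar_density_nonzero[of x] det_normalize_rows[of x]
    by (cases "haar_density x = 0") (auto simp: SL2_def)
  then show ?thesis by (simp add: emeasure_haar_mu del: mult_eq_0_iff)
qed

lemma abs_matrix_entry_le_norm: "\<bar>(M::real^2^2) $ i $ j\<bar> \<le> norm M"
  using component_le_norm_cart[of "M$i" j] Finite_Cartesian_Product.norm_nth_le[of M i] by linarith

lemma haar_mu_compact_finite:
  assumes "compact K" shows "emeasure haar_mu K < \<infinity>"
proof -
  have [measurable]: "K \<in> sets borel" using assms by (simp add: compact_imp_closed borel_closed)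
  obtain B where B: "\<And>M. M \<in> K \<Longrightarrow> norm M \<le> B"
    using compact_imp_bounded[OF assms] unfolding bounded_iff by blast
  let ?C = "cbox ((-B, -B), (-B, -B)) ((B, B), (B, B)) :: mat_rows set"
  text \<open>Since \<open>det x \<le> 1\<close> on the support of the density, \<open>x\<close> is no larger than its normalisation.\<close>
  have le: "haar_density x * indicator K (normalize_rows x) \<le> 2 * indicator ?C x" for x
  proof (cases "haar_density x \<noteq> 0 \<and> normalize_rows x \<in> K")
    case True
    let ?s = "sqrt (rows_det x)"
    have s: "0 < ?s" "?s \<le> 1" using True haar_density_nonzero by auto
    have entry: "\<bar>normalize_rows x $ i $ j\<bar> \<le> B" for i j
      using abs_matrix_entry_le_norm[of "normalize_rows x" i j] B True by force
    have shrink: "\<bar>y\<bar> \<le> B" if "\<bar>y / ?s\<bar> \<le> B" for y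
    proof -
      have "\<bar>y\<bar> = \<bar>y / ?s\<bar> * ?s" using s by (simp add: abs_mult)
      also have "\<dots> \<le> \<bar>y / ?s\<bar> * 1" using s by (intro mult_left_mono) auto
      finally show ?thesis using that by simp
    qed
    have "\<bar>fst (fst x)\<bar> \<le> B" "\<bar>snd (fst x)\<bar> \<le> B" "\<bar>fst (snd x)\<bar> \<le> B" "\<bar>snd (snd x)\<bar> \<le> B"
      using shrink entry[of 1 1] entry[of 1 2] entry[of 2 1] entry[of 2 2]
      by (auto simp: normalize_rows_def)
    then have "x \<in> ?C" by (cases x) (auto simp: cbox_Pair_eq abs_le_iff)
    then show ?thesis by (auto simp: haar_density_def indicator_def)
  qed auto
  have "emeasure haar_mu K = (\<integral>\<^sup>+x. haar_density x * indicator K (normalize_rows x) \<partial>lborel)"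
    by (rule emeasure_haar_mu) measurable
  also have "\<dots> \<le> (\<integral>\<^sup>+x. 2 * indicator ?C x \<partial>lborel)" by (rule nn_integral_mono) (rule le)
  also have "\<dots> = 2 * emeasure lborel ?C" by (rule nn_integral_cmult_indicator) simp
  also have "\<dots> < \<infinity>"
    using emeasure_lborel_cbox_finite[of "((-B,-B),(-B,-B))" "((B,B),(B,B))"]
    by (simp add: ennreal_mult_less_top)
  finally show ?thesis .
qed

lemma haar_mu_open_pos:
  assumes "openin (top_of_set SL2) U" "U \<noteq> {}"
  shows "emeasure haar_mu U > 0"
proof -
  obtain Ob where Ob: "open Ob" "U = SL2 \<inter> Ob" using assms(1) by (auto simp: openin_open)
  obtain M where M: "M \<in> U" using assms(2) by blast
  have [measurable]: "U \<in> sets borel" using Ob by (simp add: borel_open)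
  text \<open>A neighbourhood of \<open>M / \<surd>2\<close> inside the cone that \<open>normalize_rows\<close> maps into \<open>U\<close>.\<close>
  define V where "V = normalize_rows -` Ob \<inter> {x. 1/4 < rows_det x \<and> rows_det x < 1}"
  have "continuous_on {x. 1/4 < rows_det x \<and> rows_det x < 1} normalize_rows"
    unfolding normalize_rows_def rows_det_def
    by (subst mat2_eq_sum_scaleR, intro continuous_intros) auto
  moreover have "open {x. 1/4 < rows_det x \<and> rows_det x < 1}"
    unfolding rows_det_def by (intro open_Collect_conj open_Collect_less continuous_intros)
  ultimately have "open V" unfolding V_def using Ob(1) continuous_on_open_vimage by blast
  define c where "c = sqrt (1/2)"
  define x0 :: mat_rows where "x0 = ((c * M$1$1, c * M$1$2), (c * M$2$1, c * M$2$2))"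
  have "M$1$1 * M$2$2 - M$1$2 * M$2$1 = 1" using M Ob by (auto simp: SL2_iff_entries)
  then have "rows_det x0 = 1/2"
    by (simp add: rows_det_def x0_def c_def algebra_simps) (simp add: mult.assoc[symmetric])
  moreover from this have "sqrt (rows_det x0) = c" by (simp add: c_def)
  then have "normalize_rows x0 = M"
    unfolding normalize_rows_def by (simp only:) (simp add: x0_def c_def matrix2_eq_iff)
  ultimately have "x0 \<in> V" using M Ob by (auto simp: V_def)
  have "2 * indicator V x \<le> haar_density x * indicator U (normalize_rows x)" for x
    using det_normalize_rows[of x] Ob
    by (auto simp: V_def haar_density_def SL2_def indicator_def)
  then have "(\<integral>\<^sup>+x. 2 * indicator V x \<partial>lborel) \<le> emeasure haar_mu U"
    by (simp add: emeasure_haar_mu nn_integral_mono)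
  moreover have "0 < (\<integral>\<^sup>+x. 2 * indicator V x \<partial>lborel)"
    using emeasure_lborel_open_pos[OF \<open>open V\<close> \<open>x0 \<in> V\<close>] \<open>open V\<close>
    by (simp add: borel_open nn_integral_cmult_indicator ennreal_zero_less_mult_iff)
  ultimately show ?thesis by order
qed

lemma haar_SL2_haar_mu: "haar_SL2 haar_mu"
  unfolding haar_SL2_def
  using sets_haar_mu haar_mu_outside_SL2 haar_mu_left_invariant haar_mu_compact_finite haar_mu_open_pos
  by auto

lemma SUP_indicator_incseq:
  assumes "incseq S" shows "(SUP n. indicator (S n) x :: ennreal) = indicator (\<Union>n. S n) x"
proof (cases "x \<in> (\<Union>n. S n)")
  case True
  then obtain n where n: "x \<in> S n" by blast
  have "(SUP n. indicator (S n) x :: ennreal) = 1"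
  proof (rule antisym)
    show "(SUP n. indicator (S n) x :: ennreal) \<le> 1" by (rule SUP_least) (simp add: indicator_def)
    show "1 \<le> (SUP n. indicator (S n) x :: ennreal)"
      using SUP_upper[of n UNIV "\<lambda>n. indicator (S n) x :: ennreal"] n by simp
  qed
  then show ?thesis using True by simp
qed (simp add: indicator_def)

lemma nn_integral_indicator_Union_incseq:
  assumes inc: "incseq S" and [measurable]: "\<And>n. S n \<in> sets M" "f \<in> borel_measurable M"
  shows "(\<integral>\<^sup>+x. f x * indicator (\<Union>n. S n) x \<partial>M) = (SUP n. \<integral>\<^sup>+x. f x * indicator (S n) x \<partial>M)"
proof -
  have "(\<integral>\<^sup>+x. f x * indicator (\<Union>n. S n) x \<partial>M) = (\<integral>\<^sup>+x. (SUP n. f x * indicator (S n) x) \<partial>M)"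
    by (simp add: SUP_mult_left_ennreal[symmetric] SUP_indicator_incseq[OF inc])
  also have "\<dots> = (SUP n. \<integral>\<^sup>+x. f x * indicator (S n) x \<partial>M)"
    using inc
    by (intro nn_integral_monotone_convergence_SUP)
      (auto simp: incseq_def le_fun_def indicator_def subset_eq intro!: mult_left_mono)
  finally show ?thesis .
qed

lemma nn_integral_exp_substitution:
  assumes [measurable]: "f \<in> borel_measurable borel"
  shows "(\<integral>\<^sup>+x. f x * indicator {0<..} x \<partial>lborel) = (\<integral>\<^sup>+t. f (exp t) * ennreal (exp t) \<partial>lborel)"
proof -
  define T where "T n = {- real n - 1 .. real n + 1}" for n :: nat
  define S where "S n = {exp (- real n - 1) .. exp (real n + 1)}" for n :: nat
  have "incseq S" "incseq T" unfolding S_def T_def incseq_def by auto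
  have "(\<Union>n. T n) = UNIV"
  proof -
    have "x \<in> T (nat \<lceil>\<bar>x\<bar>\<rceil>)" for x :: real
      unfolding T_def by (auto simp: abs_le_iff) linarith+
    then show ?thesis by blast
  qed
  moreover have "(\<Union>n. S n) = {0<..}"
  proof
    show "(\<Union>n. S n) \<subseteq> {0<..}" by (auto simp: S_def) (meson exp_gt_zero less_le_trans)
    show "{0<..} \<subseteq> (\<Union>n. S n)"
    proof
      fix x :: real assume "x \<in> {0<..}"
      obtain n :: nat where "\<bar>ln x\<bar> \<le> real n" using real_arch_simple by blast
      then have "exp (- real n - 1) \<le> exp (ln x)" "exp (ln x) \<le> exp (real n + 1)"
        by auto
      with \<open>x \<in> {0<..}\<close> show "x \<in> (\<Union>n. S n)" by (auto simp: S_def)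
    qed
  qed
  moreover have "(\<integral>\<^sup>+x. f x * indicator (S n) x \<partial>lborel) =
      (\<integral>\<^sup>+t. f (exp t) * ennreal (exp t) * indicator (T n) t \<partial>lborel)" for n
    unfolding S_def T_def
    by (rule nn_integral_substitution_aux) (auto intro!: continuous_intros DERIV_exp)
  ultimately show ?thesis
    using nn_integral_indicator_Union_incseq[OF \<open>incseq S\<close>, of lborel f]
      nn_integral_indicator_Union_incseq[OF \<open>incseq T\<close>, of lborel "\<lambda>t. f (exp t) * ennreal (exp t)"]
    by (simp add: S_def T_def)
qed

lemma nn_integral_exp_minus_substitution:
  assumes [measurable]: "f \<in> borel_measurable borel"
  shows "(\<integral>\<^sup>+x. f x * indicator {0<..} x \<partial>lborel) = (\<integral>\<^sup>+t. f (exp (- t)) * ennreal (exp (- t)) \<partial>lborel)"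
  using nn_integral_real_affine[where f="\<lambda>t. f (exp t) * ennreal (exp t)" and c="-1" and t=0]
  by (simp add: nn_integral_exp_substitution)

lemma nn_integral_sin_double_substitution:
  assumes [measurable]: "f \<in> borel_measurable borel"
  shows "(\<integral>\<^sup>+x. f x * indicator {-1/2..1/2} x \<partial>lborel) =
    (\<integral>\<^sup>+\<theta>. f (sin (2*\<theta>) / 2) * ennreal (cos (2*\<theta>)) * indicator {-pi/4..pi/4} \<theta> \<partial>lborel)"
proof -
  have "(\<integral>\<^sup>+x. f x * indicator {sin (2*(-pi/4)) / 2 .. sin (2*(pi/4)) / 2} x \<partial>lborel) =
    (\<integral>\<^sup>+\<theta>. f (sin (2*\<theta>) / 2) * ennreal (cos (2*\<theta>)) * indicator {-pi/4..pi/4} \<theta> \<partial>lborel)"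
  proof (rule nn_integral_substitution_aux)
    show "((\<lambda>\<theta>. sin (2*\<theta>) / 2) has_real_derivative cos (2*x)) (at x)" for x
      by (auto intro!: derivative_eq_intros)
    show "x \<in> {-pi/4..pi/4} \<Longrightarrow> 0 \<le> cos (2*x)" for x by (intro cos_ge_zero) auto
  qed (auto intro: continuous_intros)
  then show ?thesis by simp
qed

lemma nn_integral_linear_unit_interval: "(\<integral>\<^sup>+x. ennreal (2 * x) * indicator {0..1} x \<partial>lborel) = 1"
proof -
  have "(\<integral>\<^sup>+x. ennreal (2 * x) * indicator {0..1} x \<partial>lborel) = ennreal ((\<lambda>x::real. x^2) 1 - (\<lambda>x. x^2) 0)"
    by (rule nn_integral_FTC_Icc[where F="\<lambda>x. x^2"]) (auto intro!: derivative_eq_intros)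
  then show ?thesis by simp
qed

section \<open>The Haar measure in the coordinates \<open>(b, c, d)\<close>\<close>

lemma borel_measurable_sl2_of_bcd [measurable]:
  assumes [measurable]: "f \<in> borel_measurable M" "g \<in> borel_measurable M" "h \<in> borel_measurable M"
  shows "(\<lambda>x. sl2_of_bcd (f x) (g x) (h x)) \<in> borel_measurable M"
  unfolding sl2_of_bcd_def by measurable

lemma sl2_of_bcd_in_W_setD: "sl2_of_bcd b c d \<in> W_set \<Longrightarrow> d > 0 \<and> \<bar>b * d\<bar> < 1/2"
  by (auto simp: sl2_of_bcd_def W_set_def)

lemma rows_det_shift_first_entry: "d \<noteq> 0 \<Longrightarrow> rows_det ((b*c/d + \<delta>/d, b), (c, d)) = \<delta>"
  by (simp add: rows_det_def field_simps)

lemma normalize_rows_shift_first_entry: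
  assumes "d \<noteq> 0" "\<delta> > 0"
  shows "normalize_rows ((b*c/d + \<delta>/d, b), (c, d)) = sl2_of_bcd (b / sqrt \<delta>) (c / sqrt \<delta>) (d / sqrt \<delta>)"
proof -
  have "(b*c/d + \<delta>/d) / sqrt \<delta> = (1 + b / sqrt \<delta> * (c / sqrt \<delta>)) / (d / sqrt \<delta>)"
    using assms by (simp add: field_simps)
  then show ?thesis
    unfolding normalize_rows_def rows_det_shift_first_entry[OF assms(1)] by (simp add: sl2_of_bcd_def)
qed

text \<open>Integrating out the entry \<open>a\<close> by the substitution \<open>a = (b c + \<delta>) / d\<close>, \<open>\<delta> = det\<close>.\<close>
lemma nn_integral_haar_density_first_entry:
  assumes [measurable]: "A \<in> sets borel" and AW: "A \<subseteq> W_set"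
  shows "(\<integral>\<^sup>+a. haar_density ((a,b),(c,d)) * indicator A (normalize_rows ((a,b),(c,d))) \<partial>lborel) =
    indicator {0<..} d * ennreal (1/d) *
      (\<integral>\<^sup>+\<delta>. 2 * indicator {0<..1} \<delta> * indicator A (sl2_of_bcd (b/sqrt \<delta>) (c/sqrt \<delta>) (d/sqrt \<delta>)) \<partial>lborel)"
proof (cases "d > 0")
  case False
  have z: "haar_density ((a,b),(c,d)) * indicator A (normalize_rows ((a,b),(c,d))) = 0" for a
  proof (cases "haar_density ((a,b),(c,d)) = 0")
    case False
    then have "0 < rows_det ((a,b),(c,d))" using haar_density_nonzero by blast
    then have "normalize_rows ((a,b),(c,d)) $ 2 $ 2 \<le> 0"
      using \<open>\<not> d > 0\<close> by (simp add: normalize_rows_def divide_nonpos_pos)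
    then show ?thesis using AW by (auto simp: W_set_def indicator_def)
  qed simp
  show ?thesis using False by (simp add: z del: mult_eq_0_iff)
next
  case True
  let ?f = "\<lambda>a. haar_density ((a,b),(c,d)) * indicator A (normalize_rows ((a,b),(c,d)))"
  have "(\<integral>\<^sup>+a. ?f a \<partial>lborel) = ennreal \<bar>1/d\<bar> * (\<integral>\<^sup>+\<delta>. ?f (b*c/d + (1/d) * \<delta>) \<partial>lborel)"
    by (rule nn_integral_real_affine) (use True in auto)
  also have "(\<lambda>\<delta>. ?f (b*c/d + (1/d) * \<delta>)) =
      (\<lambda>\<delta>. 2 * indicator {0<..1} \<delta> * indicator A (sl2_of_bcd (b/sqrt \<delta>) (c/sqrt \<delta>) (d/sqrt \<delta>)))"
  proof
    fix \<delta> :: real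
    show "?f (b*c/d + (1/d) * \<delta>) =
        2 * indicator {0<..1} \<delta> * indicator A (sl2_of_bcd (b/sqrt \<delta>) (c/sqrt \<delta>) (d/sqrt \<delta>))"
      using True rows_det_shift_first_entry[of d b c \<delta>] normalize_rows_shift_first_entry[of d \<delta> b c]
      by (cases "\<delta> > 0") (auto simp: haar_density_def indicator_def)
  qed
  finally show ?thesis using True by simp
qed

text \<open>The variables are ordered \<open>(c,d,b)\<close>, the order in which they are integrated below.\<close>
definition bcd_density :: "(real^2^2) set \<Rightarrow> real \<times> real \<times> real \<Rightarrow> ennreal" where
  "bcd_density A y = indicator {0<..} (fst (snd y)) * ennreal (1 / fst (snd y)) *
     indicator A (sl2_of_bcd (snd (snd y)) (fst y) (fst (snd y)))"

lemma borel_measurable_bcd_density [measurable]: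
  assumes [measurable]: "A \<in> sets borel" shows "bcd_density A \<in> borel_measurable borel"
  unfolding bcd_density_def[abs_def] by measurable

lemma nn_integral_bcd_density_scaled:
  assumes [measurable]: "A \<in> sets borel" and "\<delta> > 0"
  shows "(\<integral>\<^sup>+y. indicator {0<..} (fst (snd y)) * ennreal (1 / fst (snd y)) *
      indicator A (sl2_of_bcd (snd (snd y) / sqrt \<delta>) (fst y / sqrt \<delta>) (fst (snd y) / sqrt \<delta>)) \<partial>lborel) =
    ennreal \<delta> * (\<integral>\<^sup>+y. bcd_density A y \<partial>lborel)"
proof -
  define s where "s = sqrt \<delta>"
  have s: "s > 0" "\<bar>s\<bar> ^ DIM(real \<times> real \<times> real) * (1/s) = \<delta>"
    using \<open>\<delta> > 0\<close> by (auto simp: s_def power3_eq_cube)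
  let ?f = "\<lambda>y::real \<times> real \<times> real. indicator {0<..} (fst (snd y)) * ennreal (1 / fst (snd y)) *
      indicator A (sl2_of_bcd (snd (snd y) / s) (fst y / s) (fst (snd y) / s))"
  have "?f (s *\<^sub>R y) = ennreal (1/s) * bcd_density A y" for y
  proof (cases "fst (snd y) > 0")
    case True
    then have "ennreal (1 / (s * fst (snd y))) = ennreal (1/s) * ennreal (1 / fst (snd y))"
      using s by (simp add: ennreal_mult'[symmetric])
    then show ?thesis using True s by (simp add: bcd_density_def mult_ac)
  qed (use s in \<open>simp add: bcd_density_def zero_less_mult_iff\<close>)
  then have "(\<integral>\<^sup>+y. ?f y \<partial>lborel) =
      ennreal (\<bar>s\<bar> ^ DIM(real \<times> real \<times> real)) * (ennreal (1/s) * (\<integral>\<^sup>+y. bcd_density A y \<partial>lborel))"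
    using nn_integral_lborel_scaleR[of ?f s] s by (simp add: nn_integral_cmult)
  also have "\<dots> = ennreal \<delta> * (\<integral>\<^sup>+y. bcd_density A y \<partial>lborel)"
  proof -
    have "ennreal (\<bar>s\<bar> ^ DIM(real \<times> real \<times> real) * (1/s)) =
        ennreal (\<bar>s\<bar> ^ DIM(real \<times> real \<times> real)) * ennreal (1/s)"
      by (rule ennreal_mult) (use s in auto)
    then show ?thesis by (simp only: mult.assoc[symmetric] s(2))
  qed
  finally show ?thesis by (simp add: s_def)
qed

lemma nn_integral_bcd_density_delta_slice:
  assumes [measurable]: "A \<in> sets borel"
  shows "(\<integral>\<^sup>+y. indicator {0<..} (fst (snd y)) * ennreal (1 / fst (snd y)) *
      (2 * indicator {0<..1} \<delta> *
        indicator A (sl2_of_bcd (snd (snd y) / sqrt \<delta>) (fst y / sqrt \<delta>) (fst (snd y) / sqrt \<delta>))) \<partial>lborel) =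
    ennreal (2 * \<delta>) * indicator {0..1} \<delta> * (\<integral>\<^sup>+y. bcd_density A y \<partial>lborel)"
proof (cases "0 < \<delta> \<and> \<delta> \<le> 1")
  case True
  have "(\<integral>\<^sup>+y. indicator {0<..} (fst (snd y)) * ennreal (1 / fst (snd y)) *
      (2 * indicator {0<..1} \<delta> *
        indicator A (sl2_of_bcd (snd (snd y) / sqrt \<delta>) (fst y / sqrt \<delta>) (fst (snd y) / sqrt \<delta>))) \<partial>lborel) =
    2 * (\<integral>\<^sup>+y. indicator {0<..} (fst (snd y)) * ennreal (1 / fst (snd y)) *
        indicator A (sl2_of_bcd (snd (snd y) / sqrt \<delta>) (fst y / sqrt \<delta>) (fst (snd y) / sqrt \<delta>)) \<partial>lborel)"
    using True by (subst nn_integral_cmult[symmetric]) (auto simp: mult_ac)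
  also have "\<dots> = 2 * (ennreal \<delta> * (\<integral>\<^sup>+y. bcd_density A y \<partial>lborel))"
    using True by (simp only: nn_integral_bcd_density_scaled[OF assms])
  also have "\<dots> = ennreal (2 * \<delta>) * indicator {0..1} \<delta> * (\<integral>\<^sup>+y. bcd_density A y \<partial>lborel)"
    using True by (simp add: ennreal_mult mult.assoc)
  finally show ?thesis .
next
  case False
  then have "indicator {0<..1} \<delta> = (0::ennreal)" "ennreal (2 * \<delta>) * indicator {0..1} \<delta> = 0"
    by (auto simp: indicator_def)
  then show ?thesis by simp
qed

text \<open>Integrate out \<open>a\<close>, then rescale \<open>(b,c,d)\<close> by \<open>\<surd>\<delta>\<close>: the factors \<open>\<delta>\<close> integrate
  against \<open>2 d\<delta>\<close> over \<open>]0,1]\<close> to \<open>1\<close>.\<close>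
lemma emeasure_haar_mu_eq_bcd_density:
  assumes [measurable]: "A \<in> sets borel" and AW: "A \<subseteq> W_set"
  shows "emeasure haar_mu A = (\<integral>\<^sup>+y. bcd_density A y \<partial>lborel)"
proof -
  let ?H = "\<lambda>x. haar_density x * indicator A (normalize_rows x)"
  let ?P = "\<lambda>d. indicator {0<..} d * ennreal (1/d)"
  let ?Q = "\<lambda>b c d \<delta>. 2 * indicator {0<..1} \<delta> * indicator A (sl2_of_bcd (b/sqrt \<delta>) (c/sqrt \<delta>) (d/sqrt \<delta>))"
  have "emeasure haar_mu A = (\<integral>\<^sup>+x. ?H x \<partial>lborel)" by (rule emeasure_haar_mu) measurable
  also have "\<dots> = (\<integral>\<^sup>+c. \<integral>\<^sup>+d. \<integral>\<^sup>+b. \<integral>\<^sup>+a. ?H ((a, b), (c, d)) \<partial>lborel \<partial>lborel \<partial>lborel \<partial>lborel)"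
    by (simp add: nn_integral_lborel_pair(2)[of ?H] nn_integral_lborel_pair(2)[of "\<lambda>x. ?H (x, _)"]
        nn_integral_lborel_pair(1)[of "\<lambda>x. \<integral>\<^sup>+b. \<integral>\<^sup>+a. ?H ((a, b), x) \<partial>lborel \<partial>lborel"])
  also have "\<dots> = (\<integral>\<^sup>+c. \<integral>\<^sup>+d. \<integral>\<^sup>+b. ?P d * (\<integral>\<^sup>+\<delta>. ?Q b c d \<delta> \<partial>lborel) \<partial>lborel \<partial>lborel \<partial>lborel)"
    by (simp only: nn_integral_haar_density_first_entry[OF assms])
  also have "\<dots> = (\<integral>\<^sup>+y. \<integral>\<^sup>+\<delta>. ?P (fst (snd y)) * ?Q (snd (snd y)) (fst y) (fst (snd y)) \<delta> \<partial>lborel \<partial>lborel)"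
    by (simp add: nn_integral_lborel_triple nn_integral_cmult)
  also have "\<dots> = (\<integral>\<^sup>+\<delta>. \<integral>\<^sup>+y. ?P (fst (snd y)) * ?Q (snd (snd y)) (fst y) (fst (snd y)) \<delta> \<partial>lborel \<partial>lborel)"
    by (rule nn_integral_lborel_swap) measurable
  also have "\<dots> = (\<integral>\<^sup>+\<delta>. ennreal (2 * \<delta>) * indicator {0..1} \<delta> * (\<integral>\<^sup>+y. bcd_density A y \<partial>lborel) \<partial>lborel)"
    by (simp only: nn_integral_bcd_density_delta_slice[OF assms(1)])
  also have "\<dots> = (\<integral>\<^sup>+y. bcd_density A y \<partial>lborel)"
    by (simp add: nn_integral_multc nn_integral_linear_unit_interval)
  finally show ?thesis .
qed

section \<open>The Haar measure in the coordinates \<open>(t, \<theta>, u)\<close>\<close>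

definition lower_left_integral :: "(real^2^2) set \<Rightarrow> real \<Rightarrow> real \<Rightarrow> ennreal" where
  "lower_left_integral A b d = (\<integral>\<^sup>+c. indicator A (sl2_of_bcd b c d) \<partial>lborel)"

lemma borel_measurable_lower_left_integral [measurable]:
  assumes [measurable]: "A \<in> sets borel" "f \<in> borel_measurable M" "g \<in> borel_measurable M"
  shows "(\<lambda>x. lower_left_integral A (f x) (g x)) \<in> borel_measurable M"
proof -
  have "(\<lambda>p. lower_left_integral A (fst p) (snd p)) \<in> borel_measurable (borel :: (real \<times> real) measure)"
    unfolding lower_left_integral_def by measurable
  then have "(\<lambda>x. (\<lambda>p. lower_left_integral A (fst p) (snd p)) (f x, g x)) \<in> borel_measurable M"
    by measurable
  then show ?thesis by simp
qed

lemma lower_left_integral_outside_W: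
  assumes "A \<subseteq> W_set" "d > 0" "\<not> \<bar>x\<bar> < 1/2"
  shows "lower_left_integral A ((1/d) * x) d = 0"
proof -
  have "indicator A (sl2_of_bcd ((1/d) * x) c d) = (0::ennreal)" for c
    using assms sl2_of_bcd_in_W_setD[of "(1/d) * x" c d] by (auto simp: indicator_def)
  then show ?thesis by (simp add: lower_left_integral_def)
qed

lemma coord_map_eq_sl2_of_bcd:
  assumes "cos \<theta> \<noteq> 0"
  shows "coord_map (t, \<theta>, u) =
    sl2_of_bcd (- exp t * sin \<theta>) (exp (-t) * sin \<theta> + exp (-t) * cos \<theta> * u) (exp (-t) * cos \<theta>)"
  using SL2_eq_sl2_of_bcd[of "coord_map (t, \<theta>, u)"] assms
  by (simp add: SL2_def det_coord_map) (simp add: coord_map_mat2 algebra_simps)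

lemma nn_integral_coord_map_u:
  assumes [measurable]: "A \<in> sets borel" and c: "cos \<theta> > 0"
  shows "(\<integral>\<^sup>+u. indicator A (coord_map (t, \<theta>, u)) \<partial>lborel) =
    ennreal (exp t / cos \<theta>) * lower_left_integral A (- exp t * sin \<theta>) (exp (-t) * cos \<theta>)"
proof -
  define k where "k = exp (-t) * cos \<theta>"
  have k: "k > 0" using c by (simp add: k_def)
  have "lower_left_integral A (- exp t * sin \<theta>) k =
      ennreal \<bar>k\<bar> * (\<integral>\<^sup>+u. indicator A (sl2_of_bcd (- exp t * sin \<theta>) (exp (-t) * sin \<theta> + k * u) k) \<partial>lborel)"
    unfolding lower_left_integral_def by (rule nn_integral_real_affine) (use k in auto)
  also have "\<dots> = ennreal k * (\<integral>\<^sup>+u. indicator A (coord_map (t, \<theta>, u)) \<partial>lborel)"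
    using coord_map_eq_sl2_of_bcd[of \<theta> t] c k by (simp add: k_def mult.assoc)
  finally have "lower_left_integral A (- exp t * sin \<theta>) k =
      ennreal k * (\<integral>\<^sup>+u. indicator A (coord_map (t, \<theta>, u)) \<partial>lborel)" .
  moreover have "ennreal (exp t / cos \<theta>) * ennreal k = 1"
    using c k by (simp add: k_def ennreal_mult[symmetric] exp_minus field_simps)
  ultimately show ?thesis by (simp add: k_def[symmetric] mult.assoc[symmetric])
qed

text \<open>Integral of the \<open>(b,c,d)\<close> density over the level set \<open>b d = x\<close>.\<close>
definition product_level_integral :: "(real^2^2) set \<Rightarrow> real \<Rightarrow> ennreal" where
  "product_level_integral A x =
     (\<integral>\<^sup>+d. indicator {0<..} d * ennreal (1/d) * ennreal (1/d) * lower_left_integral A ((1/d) * x) d \<partial>lborel)"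

lemma borel_measurable_product_level_integral [measurable]:
  assumes [measurable]: "A \<in> sets borel" shows "product_level_integral A \<in> borel_measurable borel"
  unfolding product_level_integral_def[abs_def] by measurable

text \<open>Substitute \<open>d = e\<^sup>-\<^sup>t cos \<theta>\<close>.\<close>
lemma product_level_integral_sin_double:
  assumes [measurable]: "A \<in> sets borel" and c: "cos \<theta> > 0"
  shows "product_level_integral A (- (sin (2*\<theta>) / 2)) =
    (\<integral>\<^sup>+t. ennreal (exp t / cos \<theta>) * lower_left_integral A (- exp t * sin \<theta>) (exp (-t) * cos \<theta>) \<partial>lborel)"
proof -
  let ?f = "\<lambda>d. indicator {0<..} d * ennreal (1/d) * ennreal (1/d) * lower_left_integral A ((1/d) * (- (sin (2*\<theta>) / 2))) d"
  let ?L = "\<lambda>e. ennreal (1/(cos \<theta> * e)) * ennreal (1/(cos \<theta> * e)) * lower_left_integral A (- sin \<theta> / e) (cos \<theta> * e)"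
  have "product_level_integral A (- (sin (2*\<theta>) / 2)) = ennreal \<bar>cos \<theta>\<bar> * (\<integral>\<^sup>+e. ?f (0 + cos \<theta> * e) \<partial>lborel)"
    unfolding product_level_integral_def by (rule nn_integral_real_affine) (use c in auto)
  also have "ennreal \<bar>cos \<theta>\<bar> = ennreal (cos \<theta>)" using c by simp
  also have "(\<lambda>e. ?f (0 + cos \<theta> * e)) = (\<lambda>e. ?L e * indicator {0<..} e)"
  proof
    fix e :: real
    show "?f (0 + cos \<theta> * e) = ?L e * indicator {0<..} e"
    proof (cases "e > 0")
      case True
      then have "1 / (cos \<theta> * e) * - (sin (2 * \<theta>) / 2) = - sin \<theta> / e"
        using c unfolding sin_double by (simp add: field_simps)
      then show ?thesis using True c by (simp add: mult_ac)
    qed (use c in \<open>simp add: zero_less_mult_iff\<close>)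
  qed
  also have "(\<integral>\<^sup>+e. ?L e * indicator {0<..} e \<partial>lborel) = (\<integral>\<^sup>+t. ?L (exp (- t)) * ennreal (exp (- t)) \<partial>lborel)"
    by (rule nn_integral_exp_minus_substitution) measurable
  also have "ennreal (cos \<theta>) * \<dots> = (\<integral>\<^sup>+t. ennreal (cos \<theta>) * (?L (exp (- t)) * ennreal (exp (- t))) \<partial>lborel)"
    by (rule nn_integral_cmult[symmetric]) measurable
  also have "\<dots> = (\<integral>\<^sup>+t. ennreal (exp t / cos \<theta>) * lower_left_integral A (- exp t * sin \<theta>) (exp (-t) * cos \<theta>) \<partial>lborel)"
  proof (rule nn_integral_cong)
    fix t :: real
    define X where "X = 1 / (cos \<theta> * exp (-t))"
    have "X > 0" using c by (simp add: X_def)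
    have "cos \<theta> * X * X * exp (-t) = exp t / cos \<theta>"
      using c by (simp add: X_def exp_minus field_simps power2_eq_square)
    moreover have "ennreal (cos \<theta> * X * X * exp (-t)) = ennreal (cos \<theta>) * ennreal X * ennreal X * ennreal (exp (-t))"
      using c \<open>X > 0\<close> by (simp add: ennreal_mult)
    moreover have "- sin \<theta> / exp (-t) = - exp t * sin \<theta>" by (simp add: exp_minus field_simps)
    ultimately show "ennreal (cos \<theta>) * (?L (exp (- t)) * ennreal (exp (- t))) =
        ennreal (exp t / cos \<theta>) * lower_left_integral A (- exp t * sin \<theta>) (exp (-t) * cos \<theta>)"
      unfolding X_def[symmetric] by (simp add: mult_ac)
  qed
  finally show ?thesis .
qed

lemma nn_integral_bcd_density_eq_level_integral:
  assumes [measurable]: "A \<in> sets borel" and AW: "A \<subseteq> W_set"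
  shows "(\<integral>\<^sup>+y. bcd_density A y \<partial>lborel) =
    (\<integral>\<^sup>+x. product_level_integral A x * indicator {-1/2..1/2} x \<partial>lborel)"
proof -
  let ?P = "\<lambda>d. indicator {0<..} d * ennreal (1/d)"
  have "(\<integral>\<^sup>+y. bcd_density A y \<partial>lborel) = (\<integral>\<^sup>+z. \<integral>\<^sup>+c. bcd_density A (c, z) \<partial>lborel \<partial>lborel)"
    by (rule nn_integral_lborel_pair(2)) measurable
  also have "\<dots> = (\<integral>\<^sup>+d. \<integral>\<^sup>+b. \<integral>\<^sup>+c. bcd_density A (c, d, b) \<partial>lborel \<partial>lborel \<partial>lborel)"
    by (rule nn_integral_lborel_pair(1)) measurable
  also have "\<dots> = (\<integral>\<^sup>+d. \<integral>\<^sup>+b. ?P d * lower_left_integral A b d \<partial>lborel \<partial>lborel)"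
    by (simp add: bcd_density_def lower_left_integral_def nn_integral_cmult)
  also have "\<dots> = (\<integral>\<^sup>+d. \<integral>\<^sup>+x. ?P d * ennreal (1/d) * lower_left_integral A ((1/d) * x) d \<partial>lborel \<partial>lborel)"
  proof (rule nn_integral_cong)
    fix d :: real
    show "(\<integral>\<^sup>+b. ?P d * lower_left_integral A b d \<partial>lborel) =
        (\<integral>\<^sup>+x. ?P d * ennreal (1/d) * lower_left_integral A ((1/d) * x) d \<partial>lborel)"
    proof (cases "d > 0")
      case True
      have "(\<integral>\<^sup>+b. lower_left_integral A b d \<partial>lborel) =
          ennreal \<bar>1/d\<bar> * (\<integral>\<^sup>+x. lower_left_integral A (0 + (1/d) * x) d \<partial>lborel)"
        by (rule nn_integral_real_affine) (use True in auto)
      then show ?thesis using True by (simp add: nn_integral_cmult mult.assoc)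
    qed simp
  qed
  also have "\<dots> = (\<integral>\<^sup>+x. \<integral>\<^sup>+d. ?P d * ennreal (1/d) * lower_left_integral A ((1/d) * x) d \<partial>lborel \<partial>lborel)"
    by (rule nn_integral_lborel_swap) measurable
  also have "\<dots> = (\<integral>\<^sup>+x. product_level_integral A x * indicator {-1/2..1/2} x \<partial>lborel)"
  proof (rule nn_integral_cong)
    fix x :: real
    show "(\<integral>\<^sup>+d. ?P d * ennreal (1/d) * lower_left_integral A ((1/d) * x) d \<partial>lborel) =
        product_level_integral A x * indicator {-1/2..1/2} x"
    proof (cases "\<bar>x\<bar> < 1/2")
      case True
      then have "indicator {-1/2..1/2} x = (1::ennreal)" by (auto simp: indicator_def)
      then show ?thesis by (simp add: product_level_integral_def)
    next
      case False
      have "?P d * ennreal (1/d) * lower_left_integral A ((1/d) * x) d = 0" for d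
        using lower_left_integral_outside_W[OF AW _ False, of d] by (cases "d > 0") auto
      then show ?thesis by (simp add: product_level_integral_def del: mult_eq_0_iff)
    qed
  qed
  finally show ?thesis .
qed

text \<open>Substitute \<open>b d = - sin (2\<theta>) / 2\<close>.\<close>
lemma nn_integral_bcd_density_eq_theta_integral:
  assumes [measurable]: "A \<in> sets borel" and "A \<subseteq> W_set"
  shows "(\<integral>\<^sup>+y. bcd_density A y \<partial>lborel) =
    (\<integral>\<^sup>+\<theta>. product_level_integral A (- (sin (2*\<theta>) / 2)) * ennreal (cos (2*\<theta>)) *
       indicator {-pi/4..pi/4} \<theta> \<partial>lborel)"
proof -
  have "(\<integral>\<^sup>+y. bcd_density A y \<partial>lborel) =
      (\<integral>\<^sup>+x. product_level_integral A x * indicator {-1/2..1/2} x \<partial>lborel)"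
    by (rule nn_integral_bcd_density_eq_level_integral[OF assms])
  also have "\<dots> = (\<integral>\<^sup>+x. product_level_integral A (- x) * indicator {-1/2..1/2} (- x) \<partial>lborel)"
    using nn_integral_real_affine[where f="\<lambda>x. product_level_integral A x * indicator {-1/2..1/2} x"
        and c="-1" and t=0] by simp
  also have "\<dots> = (\<integral>\<^sup>+x. product_level_integral A (- x) * indicator {-1/2..1/2} x \<partial>lborel)"
    by (rule nn_integral_cong) (auto simp: indicator_def)
  also have "\<dots> = (\<integral>\<^sup>+\<theta>. product_level_integral A (- (sin (2*\<theta>) / 2)) * ennreal (cos (2*\<theta>)) *
       indicator {-pi/4..pi/4} \<theta> \<partial>lborel)"
    by (rule nn_integral_sin_double_substitution) measurable
  finally show ?thesis .
qed

lemma borel_measurable_coord_map [measurable]: "coord_map \<in> borel_measurable borel"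
  unfolding coord_map_eq_mat2 by measurable

lemma coord_dom_sets_borel [measurable]: "coord_dom \<in> sets borel"
  by (simp add: borel_open open_coord_dom)

lemma cos_double_eq_0_if_abs_eq_pi_quarter: "\<bar>\<theta>\<bar> = pi/4 \<Longrightarrow> cos (2*\<theta>) = 0"
proof -
  assume "\<bar>\<theta>\<bar> = pi/4"
  then have "2*\<theta> = pi/2 \<or> 2*\<theta> = - (pi/2)" by (auto simp: abs_if split: if_splits)
  then show ?thesis by (metis cos_minus cos_pi_half)
qed

lemma nn_integral_coord_map_theta_slice:
  assumes [measurable]: "A \<in> sets borel"
  shows "(\<integral>\<^sup>+t. \<integral>\<^sup>+u. indicator (coord_dom \<inter> coord_map -` A) (t, \<theta>, u) * ennreal (cos (2*\<theta>)) \<partial>lborel \<partial>lborel) =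
    product_level_integral A (- (sin (2*\<theta>) / 2)) * ennreal (cos (2*\<theta>)) * indicator {-pi/4..pi/4} \<theta>"
proof (cases "\<bar>\<theta>\<bar> < pi/4")
  case True
  have c: "cos \<theta> > 0" using True by (rule cos_pos_if_abs_less_pi_quarter)
  have "(\<integral>\<^sup>+t. \<integral>\<^sup>+u. indicator (coord_dom \<inter> coord_map -` A) (t, \<theta>, u) * ennreal (cos (2*\<theta>)) \<partial>lborel \<partial>lborel) =
      (\<integral>\<^sup>+t. (\<integral>\<^sup>+u. indicator A (coord_map (t, \<theta>, u)) \<partial>lborel) \<partial>lborel) * ennreal (cos (2*\<theta>))"
    using True by (simp add: mem_coord_dom_iff indicator_def nn_integral_multc)
  also have "(\<integral>\<^sup>+t. (\<integral>\<^sup>+u. indicator A (coord_map (t, \<theta>, u)) \<partial>lborel) \<partial>lborel) =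
      product_level_integral A (- (sin (2*\<theta>) / 2))"
    by (simp only: nn_integral_coord_map_u[OF assms c] product_level_integral_sin_double[OF assms c])
  moreover have "indicator {-pi/4..pi/4} \<theta> = (1::ennreal)" using True by (auto simp: indicator_def)
  ultimately show ?thesis by simp
next
  case False
  then have "cos (2*\<theta>) = 0 \<or> \<theta> \<notin> {-pi/4..pi/4}"
    using cos_double_eq_0_if_abs_eq_pi_quarter[of \<theta>] by (cases "\<bar>\<theta>\<bar> = pi/4") auto
  then show ?thesis using False by (auto simp: mem_coord_dom_iff indicator_def)
qed

lemma emeasure_haar_mu_coord_map:
  assumes [measurable]: "A \<in> sets borel" and "A \<subseteq> W_set"
  shows "emeasure haar_mu A = (\<integral>\<^sup>+ p. indicator (coord_dom \<inter> coord_map -` A) p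
                        * ennreal (cos (2 * fst (snd p))) \<partial>lborel)"
proof -
  let ?f = "\<lambda>p. indicator (coord_dom \<inter> coord_map -` A) p * ennreal (cos (2 * fst (snd p)))"
  have "(\<integral>\<^sup>+p. ?f p \<partial>lborel) = (\<integral>\<^sup>+t. \<integral>\<^sup>+\<theta>. \<integral>\<^sup>+u. ?f (t, \<theta>, u) \<partial>lborel \<partial>lborel \<partial>lborel)"
    by (rule nn_integral_lborel_triple) measurable
  also have "\<dots> = (\<integral>\<^sup>+\<theta>. \<integral>\<^sup>+t. \<integral>\<^sup>+u. ?f (t, \<theta>, u) \<partial>lborel \<partial>lborel \<partial>lborel)"
    by (rule nn_integral_lborel_swap) measurable
  also have "\<dots> = (\<integral>\<^sup>+\<theta>. product_level_integral A (- (sin (2*\<theta>) / 2)) * ennreal (cos (2*\<theta>)) *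
      indicator {-pi/4..pi/4} \<theta> \<partial>lborel)"
    by (simp only: fst_conv snd_conv nn_integral_coord_map_theta_slice[OF assms(1)])
  also have "\<dots> = emeasure haar_mu A"
    by (simp only: nn_integral_bcd_density_eq_theta_integral[OF assms, symmetric]
        emeasure_haar_mu_eq_bcd_density[OF assms])
  finally show ?thesis ..
qed

theorem proposition3p1:
  shows "bij_betw coord_map coord_dom W_set
     \<and> smooth_on coord_dom coord_map
     \<and> (\<exists>U \<Psi>. open U \<and> W_set \<subseteq> U \<and> smooth_on U (\<Psi> :: real^2^2 \<Rightarrow> real \<times> real \<times> real)
              \<and> (\<forall>p\<in>coord_dom. \<Psi> (coord_map p) = p))
     \<and> (\<exists>\<mu>. haar_SL2 \<mu> \<and>
          (\<forall>A\<in>sets borel. A \<subseteq> W_set \<longrightarrow>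
             emeasure \<mu> A =
               (\<integral>\<^sup>+ p. indicator (coord_dom \<inter> coord_map -` A) p
                        * ennreal (cos (2 * fst (snd p))) \<partial>lborel)))"
proof (intro conjI)
  show "bij_betw coord_map coord_dom W_set" by (rule bij_betw_coord_map)
  show "smooth_on coord_dom coord_map" by (rule smooth_on_coord_map)
  have "\<forall>p\<in>coord_dom. coord_inv (coord_map p) = p"
    using coord_inv_coord_map mem_coord_dom_iff by auto
  then show "\<exists>U \<Psi>. open U \<and> W_set \<subseteq> U \<and> smooth_on U (\<Psi> :: real^2^2 \<Rightarrow> real \<times> real \<times> real)
      \<and> (\<forall>p\<in>coord_dom. \<Psi> (coord_map p) = p)"
    using open_W_nbhd W_set_eq smooth_on_coord_inv by blast
  show "\<exists>\<mu>. haar_SL2 \<mu> \<and> (\<forall>A\<in>sets borel. A \<subseteq> W_set \<longrightarrow>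
      emeasure \<mu> A = (\<integral>\<^sup>+ p. indicator (coord_dom \<inter> coord_map -` A) p * ennreal (cos (2 * fst (snd p))) \<partial>lborel))"
    using haar_SL2_haar_mu emeasure_haar_mu_coord_map by blast
qed

end
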